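(* Let $\mathbb{K}$ be an algebraically closed field of characteristic zero, let $Y$ be an affine factorial variety over $\mathbb{K}$, and let $f\in\mathbb{K}[Y]$ be non-constant with $f=p_1^{a_1}\cdots p_s^{a_s}$, where $p_1,\dots,p_s$ are pairwise non-associated prime elements of $\mathbb{K}[Y]$ and $a_i\in\mathbb{Z}_{>0}$. Let $X=\{uv=f\}\subseteq\mathbb{A}^2_{u,v}\times Y$. Then the divisor class group satisfies $\operatorname{Cl}(X)\cong\mathbb{Z}^s/\langle\omega\rangle$, where $\omega=(a_1,\dots,a_s)$. *)

theory Defs
  imports "HOL-Algebra.Coset" "HOL-Computational_Algebra.Polynomial"
    "HOL-Computational_Algebra.Factorial_Ring"
begin

definition alg_closed_field :: "('k::field) itself \<Rightarrow> bool" where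
  "alg_closed_field _ \<longleftrightarrow> (\<forall>p :: 'k poly. degree p \<ge> 1 \<longrightarrow> (\<exists>x. poly p x = 0))"

definition unital_ring_hom :: "('a::ring_1 \<Rightarrow> 'b::ring_1) \<Rightarrow> bool" where
  "unital_ring_hom \<phi> \<longleftrightarrow> \<phi> 1 = 1 \<and> (\<forall>x y. \<phi> (x + y) = \<phi> x + \<phi> y) \<and>
     (\<forall>x y. \<phi> (x * y) = \<phi> x * \<phi> y)"

inductive_set alg_span :: "('k \<Rightarrow> 'r::ring_1) \<Rightarrow> 'r set \<Rightarrow> 'r set"
  for \<phi> S where
  scalar: "\<phi> c \<in> alg_span \<phi> S"
| gen: "x \<in> S \<Longrightarrow> x \<in> alg_span \<phi> S"
| add: "x \<in> alg_span \<phi> S \<Longrightarrow> y \<in> alg_span \<phi> S \<Longrightarrow> x + y \<in> alg_span \<phi> S"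
| mult: "x \<in> alg_span \<phi> S \<Longrightarrow> y \<in> alg_span \<phi> S \<Longrightarrow> x * y \<in> alg_span \<phi> S"

definition finitely_generated_algebra :: "('k::field \<Rightarrow> 'r::ring_1) \<Rightarrow> bool" where
  "finitely_generated_algebra \<phi> \<longleftrightarrow>
     unital_ring_hom \<phi> \<and> (\<exists>S. finite S \<and> alg_span \<phi> S = UNIV)"

definition prime_element :: "'r::comm_ring_1 \<Rightarrow> bool" where
  "prime_element p \<longleftrightarrow> p \<noteq> 0 \<and> \<not> p dvd 1 \<and> (\<forall>x y. p dvd x * y \<longrightarrow> p dvd x \<or> p dvd y)"

definition factorial_domain :: "('r::idom) itself \<Rightarrow> bool" where
  "factorial_domain _ \<longleftrightarrow> (\<forall>x :: 'r. x \<noteq> 0 \<and> \<not> x dvd 1 \<longrightarrow>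
      (\<exists>ps. (\<forall>p\<in>set ps. prime_element p) \<and> x = prod_list ps))"

definition tc_ideal :: "('b::comm_ring_1) set \<Rightarrow> bool" where
  "tc_ideal J \<longleftrightarrow> 0 \<in> J \<and> (\<forall>x\<in>J. \<forall>y\<in>J. x + y \<in> J) \<and> (\<forall>x\<in>J. \<forall>r. r * x \<in> J)"

definition tc_prime_ideal :: "('b::comm_ring_1) set \<Rightarrow> bool" where
  "tc_prime_ideal P \<longleftrightarrow> tc_ideal P \<and> P \<noteq> UNIV \<and> (\<forall>x y. x * y \<in> P \<longrightarrow> x \<in> P \<or> y \<in> P)"

definition ideal_gen :: "('b::comm_ring_1) set \<Rightarrow> 'b set" where
  "ideal_gen S = \<Inter> {J. tc_ideal J \<and> S \<subseteq> J}"

fun ideal_pow :: "('b::comm_ring_1) set \<Rightarrow> nat \<Rightarrow> 'b set" where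
  "ideal_pow P 0 = UNIV"
| "ideal_pow P (Suc n) = ideal_gen {x * y | x y. x \<in> P \<and> y \<in> ideal_pow P n}"

text \<open>Throughout, the coordinate ring of X is A = B/I with I a prime ideal of B.
  Ideals of A correspond to ideals of B containing I. A height-one prime of A
  corresponds to a prime P of B with I strictly contained in P and no prime strictly between.\<close>

definition height_one_primes_mod :: "('b::comm_ring_1) set \<Rightarrow> 'b set set" where
  "height_one_primes_mod I = {P. tc_prime_ideal P \<and> I \<subset> P \<and>
      \<not> (\<exists>Q. tc_prime_ideal Q \<and> I \<subset> Q \<and> Q \<subset> P)}"

text \<open>Valuation of the class of g in A along the prime divisor P/I:
  the largest n with g in the n-th symbolic power of P/I, i.e. g in (P/I)^n A_{P/I}.\<close>
definition valuation_mod :: "('b::comm_ring_1) set \<Rightarrow> 'b set \<Rightarrow> 'b \<Rightarrow> int" where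
  "valuation_mod I P g = int (GREATEST n. \<exists>s. s \<notin> P \<and> s * g \<in> {x + y | x y. x \<in> ideal_pow P n \<and> y \<in> I})"

definition div_mod :: "('b::comm_ring_1) set \<Rightarrow> 'b \<Rightarrow> ('b set \<Rightarrow> int)" where
  "div_mod I g = (\<lambda>P. if P \<in> height_one_primes_mod I then valuation_mod I P g else 0)"

definition weil_divisors_mod :: "('b::comm_ring_1) set \<Rightarrow> ('b set \<Rightarrow> int) monoid" where
  "weil_divisors_mod I = \<lparr>carrier = {D. finite {P. D P \<noteq> 0} \<and> {P. D P \<noteq> 0} \<subseteq> height_one_primes_mod I},
     monoid.mult = (\<lambda>D E P. D P + E P), one = (\<lambda>P. 0)\<rparr>"

text \<open>Principal divisors div(a/b) = div(a) - div(b) for nonzero a, b in A.\<close>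
definition principal_divisors_mod :: "('b::comm_ring_1) set \<Rightarrow> ('b set \<Rightarrow> int) set" where
  "principal_divisors_mod I = {(\<lambda>P. div_mod I a P - div_mod I b P) | a b. a \<notin> I \<and> b \<notin> I}"

definition class_group_mod :: "('b::comm_ring_1) set \<Rightarrow> ('b set \<Rightarrow> int) set monoid" where
  "class_group_mod I = weil_divisors_mod I Mod principal_divisors_mod I"

text \<open>K[Y][u,v] is represented as ('r poly) poly: the inner variable is u, the outer is v.
  The element uv - f is [:[:-f:], [:0,1:]:] (coefficient of v^0 is -f, of v^1 is u).\<close>
definition uv_minus :: "'r::comm_ring_1 \<Rightarrow> 'r poly poly" where
  "uv_minus f = [:[:-f:], [:0, 1:]:]"

definition X_ideal :: "'r::comm_ring_1 \<Rightarrow> 'r poly poly set" where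
  "X_ideal f = ideal_gen {uv_minus f}"

definition Zpow :: "nat \<Rightarrow> (nat \<Rightarrow> int) monoid" where
  "Zpow s = \<lparr>carrier = {x. \<forall>i\<ge>s. x i = 0}, monoid.mult = (\<lambda>x y i. x i + y i), one = (\<lambda>i. 0)\<rparr>"

definition cyclic_sub :: "nat \<Rightarrow> (nat \<Rightarrow> int) \<Rightarrow> (nat \<Rightarrow> int) set" where
  "cyclic_sub s w = {(\<lambda>i. if i < s then k * w i else 0) | k. True}"

end

(*
  Write B = R[u,v] for the factorial ring R and A = B/(uv - f).  Inverting u identifies A with
  a subring of R[u, 1/u], so every height-one prime of A not containing u is the extension of a
  height-one prime of the factorial ring R[u]; there the local rings are discrete valuation rings
  with explicit uniformizers, and every divisor supported away from u = 0 is principal.  The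
  height-one primes containing u are exactly the K_i = (u, p_i), seen in the chart where v is
  inverted, and div(u) = a_1 K_1 + ... + a_s K_s.  Hence the K_i generate Cl(A), and a
  combination of the K_i is principal exactly when it is an integer multiple of div(u): a
  rational function whose divisor avoids all primes not containing u is, in the factorial ring
  R[u], a constant times a power of u.
*)
theory Submission
  imports Defs "HOL-Computational_Algebra.Field_as_Ring"
    "HOL-Computational_Algebra.Polynomial_Factorial"
begin

text \<open>The fraction field of an arbitrary domain is made a Euclidean ring with gcd, as
  Field_as_Ring does for the rationals; polynomials over it then form a factorial ring.\<close>

instantiation fract :: (idom)
  "{unique_euclidean_ring, normalization_euclidean_semiring, normalization_semidom_multiplicative}"
begin
definition [simp]: "normalize_fract = (normalize_field :: 'a fract \<Rightarrow> _)"
definition [simp]: "unit_factor_fract = (unit_factor_field :: 'a fract \<Rightarrow> _)"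
definition [simp]: "modulo_fract = (mod_field :: 'a fract \<Rightarrow> _)"
definition [simp]: "euclidean_size_fract = (euclidean_size_field :: 'a fract \<Rightarrow> _)"
definition [simp]: "division_segment (x :: 'a fract) = 1"
instance
  by standard (simp_all add: dvd_field_iff field_split_simps split: if_splits)
end

instantiation fract :: (idom) euclidean_ring_gcd
begin
definition gcd_fract :: "'a fract \<Rightarrow> 'a fract \<Rightarrow> 'a fract" where
  "gcd_fract = Euclidean_Algorithm.gcd"
definition lcm_fract :: "'a fract \<Rightarrow> 'a fract \<Rightarrow> 'a fract" where
  "lcm_fract = Euclidean_Algorithm.lcm"
definition Gcd_fract :: "'a fract set \<Rightarrow> 'a fract" where
  "Gcd_fract = Euclidean_Algorithm.Gcd"
definition Lcm_fract :: "'a fract set \<Rightarrow> 'a fract" where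
  "Lcm_fract = Euclidean_Algorithm.Lcm"
instance by standard (simp_all add: gcd_fract_def lcm_fract_def Gcd_fract_def Lcm_fract_def)
end

instance fract :: (idom) field_gcd ..


lemma tc_idealD:
  assumes "tc_ideal J"
  shows "0 \<in> J" "x \<in> J \<Longrightarrow> y \<in> J \<Longrightarrow> x + y \<in> J" "x \<in> J \<Longrightarrow> r * x \<in> J"
    "x \<in> J \<Longrightarrow> x * r \<in> J" "x \<in> J \<Longrightarrow> - x \<in> J" "x \<in> J \<Longrightarrow> y \<in> J \<Longrightarrow> x - y \<in> J"
proof -
  have mult: "\<And>x r. x \<in> J \<Longrightarrow> r * x \<in> J" and add: "\<And>x y. x \<in> J \<Longrightarrow> y \<in> J \<Longrightarrow> x + y \<in> J"
    using assms unfolding tc_ideal_def by blast+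
  show "0 \<in> J" using assms unfolding tc_ideal_def by blast
  show "x \<in> J \<Longrightarrow> y \<in> J \<Longrightarrow> x + y \<in> J" by (rule add)
  show "x \<in> J \<Longrightarrow> r * x \<in> J" by (rule mult)
  show "x \<in> J \<Longrightarrow> x * r \<in> J" using mult[of x r] by (simp add: mult.commute)
  show "x \<in> J \<Longrightarrow> - x \<in> J" using mult[of x "-1"] by simp
  show "x \<in> J \<Longrightarrow> y \<in> J \<Longrightarrow> x - y \<in> J" using add[of x "- y"] mult[of y "-1"] by simp
qed

lemma tc_ideal_UNIV: "tc_ideal UNIV"
  by (simp add: tc_ideal_def)

lemma tc_ideal_multiples: "tc_ideal {y::'a::comm_ring_1. a dvd y}"
  unfolding tc_ideal_def by (auto intro: dvd_add dvd_mult)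

lemma ideal_gen_ideal: "tc_ideal (ideal_gen S)"
  unfolding ideal_gen_def tc_ideal_def by auto

lemma ideal_gen_subset: "S \<subseteq> ideal_gen S"
  unfolding ideal_gen_def by auto

lemma ideal_gen_least: "tc_ideal J \<Longrightarrow> S \<subseteq> J \<Longrightarrow> ideal_gen S \<subseteq> J"
  unfolding ideal_gen_def by auto

lemma ideal_gen_singleton: "ideal_gen {a} = {a * h | h. True}"
proof
  have "tc_ideal {a * h | h. True}"
    unfolding tc_ideal_def
    by (auto, metis mult_zero_right, metis distrib_left, metis mult.left_commute)
  moreover have "{a} \<subseteq> {a * h | h. True}" by (auto intro: exI[of _ 1])
  ultimately show "ideal_gen {a} \<subseteq> {a * h | h. True}" by (rule ideal_gen_least)
next
  show "{a * h | h. True} \<subseteq> ideal_gen {a}"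
    using ideal_gen_subset[of "{a}"] tc_idealD(4)[OF ideal_gen_ideal] by blast
qed

lemma ideal_pow_ideal: "tc_ideal (ideal_pow P n)"
  by (cases n) (auto simp: tc_ideal_UNIV ideal_gen_ideal)

lemma power_in_ideal_pow: "t \<in> P \<Longrightarrow> t ^ n \<in> ideal_pow P n"
  by (induction n) (use ideal_gen_subset in fastforce)+

lemma tc_prime_idealD:
  assumes "tc_prime_ideal P"
  shows "tc_ideal P" "x * y \<in> P \<Longrightarrow> x \<in> P \<or> y \<in> P" "1 \<notin> P"
    "x \<notin> P \<Longrightarrow> y \<notin> P \<Longrightarrow> x * y \<notin> P"
proof -
  show "tc_ideal P" "x * y \<in> P \<Longrightarrow> x \<in> P \<or> y \<in> P" "x \<notin> P \<Longrightarrow> y \<notin> P \<Longrightarrow> x * y \<notin> P"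
    using assms unfolding tc_prime_ideal_def by auto
  show "1 \<notin> P"
    using assms tc_idealD(3)[of P 1] unfolding tc_prime_ideal_def by auto
qed

lemma prime_ideal_power_notin:
  assumes "tc_prime_ideal P" "x \<notin> P"
  shows "x ^ n \<notin> P"
  by (induction n) (simp_all add: tc_prime_idealD(3,4)[OF assms(1)] assms(2))

lemma prime_ideal_prod:
  assumes "tc_prime_ideal Q" "finite A" "prod g A \<in> Q"
  shows "\<exists>x\<in>A. g x \<in> Q"
  using assms(2,3)
  by (induction A rule: finite_induct) (auto simp: tc_prime_idealD(3)[OF assms(1)] dest:
  tc_prime_idealD(2)[OF assms(1)])

lemma prime_ideal_prod_list:
  assumes "tc_prime_ideal Q" "prod_list xs \<in> Q"
  shows "\<exists>x\<in>set xs. x \<in> Q"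
  using assms(2)
    by (induction xs) (auto simp: tc_prime_idealD(3)[OF assms(1)] dest:
    tc_prime_idealD(2)[OF assms(1)])

lemma ideal_diff_refl: "tc_ideal I \<Longrightarrow> a - a \<in> I"
  using tc_idealD(1) by simp

lemma ideal_diff_sym: "tc_ideal I \<Longrightarrow> a - b \<in> I \<Longrightarrow> b - a \<in> I"
  using tc_idealD(5)[of I "a - b"] by simp

lemma ideal_diff_trans: "tc_ideal I \<Longrightarrow> a - b \<in> I \<Longrightarrow> b - c \<in> I \<Longrightarrow> a - c \<in> I"
  using tc_idealD(2)[of I "a - b" "b - c"] by simp

lemma ideal_diff_add: "tc_ideal I \<Longrightarrow> a - b \<in> I \<Longrightarrow> c - d \<in> I \<Longrightarrow> (a + c) - (b + d) \<in> I"
  using tc_idealD(2)[of I "a - b" "c - d"] by (simp add: algebra_simps)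

lemma ideal_diff_mult_left: "tc_ideal I \<Longrightarrow> a - b \<in> I \<Longrightarrow> c * a - c * b \<in> I"
  using tc_idealD(3)[of I "a - b" c] by (simp add: algebra_simps)

lemma ideal_diff_mult:
  assumes "tc_ideal I" "a - b \<in> I" "c - d \<in> I"
  shows "a * c - b * d \<in> I"
proof -
  have "a * c - b * d = c * (a - b) + b * (c - d)" by (simp add: algebra_simps)
  then show ?thesis using tc_idealD(2,3)[OF assms(1)] assms(2,3) by metis
qed

lemma ideal_diff_mem: "tc_ideal P \<Longrightarrow> I \<subseteq> P \<Longrightarrow> a - b \<in> I \<Longrightarrow> b \<in> P \<Longrightarrow> a \<in> P"
  using tc_idealD(2)[of P "a - b" b] by auto


section \<open>Valuations along a prime with a uniformizer\<close>

text \<open>For prime ideals \<open>I \<subset> P\<close> we argue in the local ring of B/I at P/I without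
  constructing it: the elements outside P are its units. Thus \<open>assoc_power_at I P t x n\<close>
  says that x is a unit times t^n there, and \<open>uniformizer_at I P t\<close> says that this local
  ring is a discrete valuation ring with uniformizer t.\<close>

definition assoc_power_at :: "'b::comm_ring_1 set \<Rightarrow> 'b set \<Rightarrow> 'b \<Rightarrow> 'b \<Rightarrow> nat \<Rightarrow> bool" where
  "assoc_power_at I P t x n \<longleftrightarrow> (\<exists>s s'. s \<notin> P \<and> s' \<notin> P \<and> s * x - s' * t ^ n \<in> I)"

definition uniformizer_at :: "'b::comm_ring_1 set \<Rightarrow> 'b set \<Rightarrow> 'b \<Rightarrow> bool" where
  "uniformizer_at I P t \<longleftrightarrow> tc_prime_ideal P \<and> tc_prime_ideal I \<and> I \<subset> P \<and> t \<in> P \<and>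
     (\<forall>x. x \<notin> I \<longrightarrow> (\<exists>n. assoc_power_at I P t x n))"

lemma uniformizer_atD:
  assumes "uniformizer_at I P t"
  shows "tc_prime_ideal P" "tc_prime_ideal I" "tc_ideal P" "tc_ideal I" "I \<subset> P" "t \<in> P"
    "x \<notin> I \<Longrightarrow> \<exists>n. assoc_power_at I P t x n"
  using assms tc_prime_idealD(1) unfolding uniformizer_at_def by blast+

lemma assoc_power_at_mult:
  assumes I: "tc_ideal I" and P: "tc_prime_ideal P"
    and "assoc_power_at I P t x n" "assoc_power_at I P t y m"
  shows "assoc_power_at I P t (x * y) (n + m)"
proof -
  obtain s1 s1' where 1: "s1 \<notin> P" "s1' \<notin> P" "s1 * x - s1' * t ^ n \<in> I"
    using assms(3) unfolding assoc_power_at_def by blast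
  obtain s2 s2' where 2: "s2 \<notin> P" "s2' \<notin> P" "s2 * y - s2' * t ^ m \<in> I"
    using assms(4) unfolding assoc_power_at_def by blast
  have "(s1 * s2) * (x * y) - (s1' * s2') * t ^ (n + m) =
     (s2 * y) * (s1 * x - s1' * t ^ n) + (s1' * t ^ n) * (s2 * y - s2' * t ^ m)"
    by (simp add: algebra_simps power_add)
  also have "\<dots> \<in> I" using 1 2 tc_idealD[OF I] by simp
  finally show ?thesis
    unfolding assoc_power_at_def using 1 2 tc_prime_idealD(4)[OF P] by blast
qed

lemma assoc_power_at_zero:
  "tc_ideal I \<Longrightarrow> tc_prime_ideal P \<Longrightarrow> x \<notin> P \<Longrightarrow> assoc_power_at I P t x 0"
  unfolding assoc_power_at_def
  by (rule exI[of _ 1], rule exI[of _ x]) (auto simp: tc_idealD tc_prime_idealD(3))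

lemma assoc_power_at_cong:
  assumes I: "tc_ideal I" and "assoc_power_at I P t x n" "x - x' \<in> I"
  shows "assoc_power_at I P t x' n"
proof -
  obtain s s' where 1: "s \<notin> P" "s' \<notin> P" "s * x - s' * t ^ n \<in> I"
    using assms(2) unfolding assoc_power_at_def by blast
  have "s * x' - s' * t ^ n = (s * x - s' * t ^ n) - s * (x - x')" by (simp add: algebra_simps)
  also have "\<dots> \<in> I" using 1 assms(3) tc_idealD[OF I] by simp
  finally show ?thesis using 1 unfolding assoc_power_at_def by blast
qed

lemma assoc_power_at_pos:
  assumes P: "tc_ideal P" and "I \<subseteq> P" "x \<in> P" "assoc_power_at I P t x n"
  shows "n > 0"
proof (rule ccontr)
  assume "\<not> n > 0"
  obtain s s' where s: "s \<notin> P" "s' \<notin> P" "s * x - s' * t ^ n \<in> I"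
    using assms(4) unfolding assoc_power_at_def by blast
  have "s' = s * x - (s * x - s' * t ^ n)" using \<open>\<not> n > 0\<close> by simp
  also have "\<dots> \<in> P" using tc_idealD(3,6)[OF P] s(3) assms(2,3) by blast
  finally show False using s(2) by blast
qed

lemma uniformizer_at_notin:
  assumes g: "uniformizer_at I P t"
  shows "t \<notin> I"
proof
  assume tI: "t \<in> I"
  have P: "tc_prime_ideal P" and I: "tc_prime_ideal I" and IP: "I \<subset> P"
    using uniformizer_atD(1-6)[OF g] by auto
  obtain x where x: "x \<in> P" "x \<notin> I" using IP by blast
  then obtain n where n: "assoc_power_at I P t x n" using uniformizer_atD(7)[OF g] by blast
  then obtain s s' where s: "s \<notin> P" "s' \<notin> P" "s * x - s' * t ^ n \<in> I"
    unfolding assoc_power_at_def by blast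
  have "n > 0" using assoc_power_at_pos[OF tc_prime_idealD(1)[OF P] _ x(1) n] IP by blast
  then have "s' * t ^ n = (s' * t ^ (n - 1)) * t" by (cases n) (simp_all add: ac_simps)
  then have "s' * t ^ n \<in> I" using tc_idealD(3)[OF tc_prime_idealD(1)[OF I] tI] by metis
  then have "s * x \<in> I" using tc_idealD(2)[OF tc_prime_idealD(1)[OF I] s(3)] by fastforce
  then show False using tc_prime_idealD(4)[OF I] s(1) x(2) IP by blast
qed

definition local_multiples :: "'b::comm_ring_1 set \<Rightarrow> 'b set \<Rightarrow> 'b \<Rightarrow> nat \<Rightarrow> 'b set" where
  "local_multiples I P t m = {z. \<exists>s b. s \<notin> P \<and> s * z - t ^ m * b \<in> I}"

lemma local_multiples_ideal:
  assumes I: "tc_ideal I" and P: "tc_prime_ideal P"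
  shows "tc_ideal (local_multiples I P t m)"
  unfolding tc_ideal_def
proof (intro conjI ballI allI)
  show "0 \<in> local_multiples I P t m"
    unfolding local_multiples_def using tc_prime_idealD(3)[OF P] tc_idealD(1)[OF I]
    by (intro CollectI exI[of _ 1] exI[of _ 0]) simp
next
  fix x y assume "x \<in> local_multiples I P t m" "y \<in> local_multiples I P t m"
  then obtain s1 b1 s2 b2 where h: "s1 \<notin> P" "s1 * x - t ^ m * b1 \<in> I"
    "s2 \<notin> P" "s2 * y - t ^ m * b2 \<in> I" unfolding local_multiples_def by blast
  have "(s1 * s2) * (x + y) - t ^ m * (s2 * b1 + s1 * b2) =
     s2 * (s1 * x - t ^ m * b1) + s1 * (s2 * y - t ^ m * b2)"
    by (simp add: algebra_simps)
  also have "\<dots> \<in> I" using h(2,4) tc_idealD(2,3)[OF I] by blast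
  finally show "x + y \<in> local_multiples I P t m"
    unfolding local_multiples_def using h(1,3) tc_prime_idealD(4)[OF P] by blast
next
  fix x r assume "x \<in> local_multiples I P t m"
  then obtain s b where h: "s \<notin> P" "s * x - t ^ m * b \<in> I" unfolding local_multiples_def by blast
  have "s * (r * x) - t ^ m * (r * b) = r * (s * x - t ^ m * b)" by (simp add: algebra_simps)
  also have "\<dots> \<in> I" using h(2) tc_idealD(3)[OF I] by blast
  finally show "r * x \<in> local_multiples I P t m" unfolding local_multiples_def using h(1) by blast
qed

lemma mult_in_local_multiples:
  assumes g: "uniformizer_at I P t" and x: "x \<in> P" and y: "y \<in> local_multiples I P t m"
  shows "x * y \<in> local_multiples I P t (Suc m)"
proof -
  have P: "tc_prime_ideal P" and I: "tc_ideal I" and IP: "I \<subseteq> P"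
    using uniformizer_atD(1-6)[OF g] by auto
  obtain s2 b2 where y: "s2 \<notin> P" "s2 * y - t ^ m * b2 \<in> I"
    using y unfolding local_multiples_def by blast
  show ?thesis
  proof (cases "x \<in> I")
    case True
    then have "1 * (x * y) - t ^ Suc m * 0 \<in> I" using tc_idealD(4)[OF I] by simp
    then show ?thesis unfolding local_multiples_def using tc_prime_idealD(3)[OF P] by blast
  next
    case False
    then obtain n s s' where h: "s \<notin> P" "s' \<notin> P" "s * x - s' * t ^ n \<in> I"
      using uniformizer_atD(7)[OF g] unfolding assoc_power_at_def by blast
    then have "n > 0"
      using assoc_power_at_pos[OF tc_prime_idealD(1)[OF P] IP x] unfolding assoc_power_at_def
        by blast
    then obtain k where n: "n = Suc k" by (cases n) auto
    have "(s * s2) * (x * y) - t ^ Suc m * (s' * t ^ k * b2) =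
       (s2 * y) * (s * x - s' * t ^ n) + (s' * t ^ n) * (s2 * y - t ^ m * b2)"
      by (simp add: algebra_simps n)
    also have "\<dots> \<in> I" using h(3) y(2) tc_idealD(2,3)[OF I] by blast
    finally show ?thesis
      unfolding local_multiples_def using h(1) y(1) tc_prime_idealD(4)[OF P] by blast
  qed
qed

lemma ideal_pow_subset_local_multiples:
  assumes g: "uniformizer_at I P t"
  shows "ideal_pow P m \<subseteq> local_multiples I P t m"
proof (induction m)
  have P: "tc_prime_ideal P" and I: "tc_ideal I"
    using uniformizer_atD(1-6)[OF g] by auto
  {
    case 0
    have "1 * z - t ^ 0 * z \<in> I" for z using tc_idealD(1)[OF I] by simp
    then show ?case unfolding local_multiples_def using tc_prime_idealD(3)[OF P] by blast
  next
    case (Suc m)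
    have "{x * y |x y. x \<in> P \<and> y \<in> ideal_pow P m} \<subseteq> local_multiples I P t (Suc m)"
      using mult_in_local_multiples[OF g] Suc.IH by blast
    then show ?case by (simp add: ideal_gen_least local_multiples_ideal[OF I P])
  }
qed

text \<open>Comparing x = unit * t^n with x = unit * t^m * c for m > n leaves t^n times a unit
  in I.\<close>

lemma assoc_power_at_le:
  assumes g: "uniformizer_at I P t" and x: "assoc_power_at I P t x n"
    and s: "s \<notin> P" "s * x - t ^ m * c \<in> I"
  shows "m \<le> n"
proof (rule ccontr)
  assume "\<not> m \<le> n"
  then obtain k where m: "m = n + Suc k" by (metis add_Suc_right less_imp_Suc_add not_le)
  have P: "tc_prime_ideal P" and I: "tc_prime_ideal I" and IP: "I \<subseteq> P" and tP: "t \<in> P"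
    using uniformizer_atD(1-6)[OF g] by auto
  have iI: "tc_ideal I" and iP: "tc_ideal P" using I P tc_prime_idealD(1) by blast+
  obtain s0 s' where h: "s0 \<notin> P" "s' \<notin> P" "s0 * x - s' * t ^ n \<in> I"
    using x unfolding assoc_power_at_def by blast
  have "t ^ n * (s * s' - s0 * t ^ Suc k * c) =
      s0 * (s * x - t ^ m * c) - s * (s0 * x - s' * t ^ n)"
    by (simp add: algebra_simps m power_add)
  also have "\<dots> \<in> I" using tc_idealD(3,6)[OF iI] s(2) h(3) by blast
  finally have "s * s' - s0 * t ^ Suc k * c \<in> P"
    using tc_prime_idealD(2)[OF I] prime_ideal_power_notin[OF I uniformizer_at_notin[OF g]] IP
    by blast
  moreover have "s0 * t ^ Suc k * c = (s0 * t ^ k * c) * t" by (simp add: ac_simps)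
  then have "s0 * t ^ Suc k * c \<in> P" using tc_idealD(3)[OF iP tP] by metis
  ultimately have "s * s' \<in> P" using tc_idealD(2)[OF iP] by fastforce
  then show False using tc_prime_idealD(4)[OF P s(1) h(2)] by blast
qed

lemma valuation_mod_eq:
  assumes g: "uniformizer_at I P t" and x: "assoc_power_at I P t x n"
  shows "valuation_mod I P x = int n"
proof -
  have I: "tc_ideal I" and tP: "t \<in> P"
    using uniformizer_atD(1-6)[OF g] by auto
  let ?T = "\<lambda>m. \<exists>s. s \<notin> P \<and> s * x \<in> {a + b |a b. a \<in> ideal_pow P m \<and> b \<in> I}"
  have "?T n"
  proof -
    obtain s s' where h: "s \<notin> P" "s' \<notin> P" "s * x - s' * t ^ n \<in> I"
      using x unfolding assoc_power_at_def by blast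
    have "s' * t ^ n \<in> ideal_pow P n"
      using tc_idealD(3)[OF ideal_pow_ideal power_in_ideal_pow[OF tP]] by blast
    moreover have "s * x = s' * t ^ n + (s * x - s' * t ^ n)" by simp
    ultimately show ?thesis using h by blast
  qed
  moreover have "m \<le> n" if T: "?T m" for m
  proof -
    obtain s1 a b where h: "s1 \<notin> P" "s1 * x = a + b" "a \<in> ideal_pow P m" "b \<in> I"
      using T by blast
    obtain s2 c where a: "s2 \<notin> P" "s2 * a - t ^ m * c \<in> I"
      using ideal_pow_subset_local_multiples[OF g] h(3) unfolding local_multiples_def by blast
    have "(s2 * s1) * x - t ^ m * c = s2 * (s1 * x) - t ^ m * c" by (simp add: ac_simps)
    also have "\<dots> = (s2 * a - t ^ m * c) + s2 * b" by (simp add: h(2) algebra_simps)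
    also have "\<dots> \<in> I" using a(2) h(4) tc_idealD(2,3)[OF I] by blast
    finally show "m \<le> n"
      using assoc_power_at_le[OF g x] tc_prime_idealD(4)[OF uniformizer_atD(1)[OF g] a(1) h(1)]
      by blast
  qed
  ultimately have "(GREATEST m. ?T m) = n" by (intro Greatest_equality) auto
  then show ?thesis unfolding valuation_mod_def by simp
qed

lemma valuation_mod_mult:
  assumes g: "uniformizer_at I P t" and "x \<notin> I" "y \<notin> I"
  shows "valuation_mod I P (x * y) = valuation_mod I P x + valuation_mod I P y"
proof -
  have P: "tc_prime_ideal P" and I: "tc_ideal I"
    using uniformizer_atD(1-6)[OF g] by auto
  obtain n m where n: "assoc_power_at I P t x n" and m: "assoc_power_at I P t y m"
    using uniformizer_atD(7)[OF g] assms(2,3) by blast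
  show ?thesis
    unfolding valuation_mod_eq[OF g n] valuation_mod_eq[OF g m]
      valuation_mod_eq[OF g assoc_power_at_mult[OF I P n m]] by simp
qed

lemma valuation_mod_notin:
  assumes g: "uniformizer_at I P t" and "x \<notin> P"
  shows "valuation_mod I P x = 0"
proof -
  have I: "tc_ideal I" and P: "tc_prime_ideal P" using uniformizer_atD(1-6)[OF g] by auto
  show ?thesis using valuation_mod_eq[OF g assoc_power_at_zero[OF I P assms(2)]] by simp
qed

lemma valuation_mod_cong:
  assumes g: "uniformizer_at I P t" and "x \<notin> I" "x - x' \<in> I"
  shows "valuation_mod I P x' = valuation_mod I P x"
proof -
  have I: "tc_ideal I" using uniformizer_atD(1-6)[OF g] by auto
  obtain n where n: "assoc_power_at I P t x n" using uniformizer_atD(7)[OF g] assms(2) by blast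
  have "valuation_mod I P x' = int n"
    by (rule valuation_mod_eq[OF g assoc_power_at_cong[OF I n assms(3)]])
  then show ?thesis using valuation_mod_eq[OF g n] by simp
qed


definition has_uniformizers :: "'b::comm_ring_1 set \<Rightarrow> bool" where
  "has_uniformizers I \<longleftrightarrow> tc_prime_ideal I \<and> (\<forall>P\<in>height_one_primes_mod I. \<exists>t. uniformizer_at I P t)"

lemma has_uniformizersD:
  assumes "has_uniformizers I"
  shows "tc_prime_ideal I" "P \<in> height_one_primes_mod I \<Longrightarrow> \<exists>t. uniformizer_at I P t"
  using assms unfolding has_uniformizers_def by blast+

lemma div_mod_mult:
  assumes "has_uniformizers I" "x \<notin> I" "y \<notin> I"
  shows "div_mod I (x * y) P = div_mod I x P + div_mod I y P"
proof (cases "P \<in> height_one_primes_mod I")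
  case True
  then obtain t where "uniformizer_at I P t" using has_uniformizersD(2)[OF assms(1)] by blast
  then show ?thesis using valuation_mod_mult assms(2,3) True unfolding div_mod_def by simp
qed (simp add: div_mod_def)

lemma div_mod_cong:
  assumes "has_uniformizers I" "x \<notin> I" "x - x' \<in> I"
  shows "div_mod I x' P = div_mod I x P"
proof (cases "P \<in> height_one_primes_mod I")
  case True
  then obtain t where "uniformizer_at I P t" using has_uniformizersD(2)[OF assms(1)] by blast
  then show ?thesis using valuation_mod_cong assms(2,3) True unfolding div_mod_def by simp
qed (simp add: div_mod_def)

lemma div_mod_notin:
  assumes "has_uniformizers I" "x \<notin> P"
  shows "div_mod I x P = 0"
proof (cases "P \<in> height_one_primes_mod I")
  case True
  then obtain t where "uniformizer_at I P t" using has_uniformizersD(2)[OF assms(1)] by blast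
  then show ?thesis using valuation_mod_notin assms(2) True unfolding div_mod_def by simp
qed (simp add: div_mod_def)

lemma div_mod_nonzero:
  assumes "has_uniformizers I" "div_mod I x P \<noteq> 0"
  shows "x \<in> P" "P \<in> height_one_primes_mod I"
  using assms div_mod_notin[OF assms(1), of x P] unfolding div_mod_def by (auto split: if_splits)

lemma div_mod_power:
  assumes "has_uniformizers I" "x \<notin> I"
  shows "div_mod I (x ^ k) P = int k * div_mod I x P"
proof (induction k)
  case 0
  have "div_mod I (1 * 1) P = div_mod I 1 P + div_mod I 1 P"
    using div_mod_mult[OF assms(1)] tc_prime_idealD(3)[OF has_uniformizersD(1)[OF assms(1)]]
    by blast
  then show ?case by simp
next
  case (Suc k)
  then show ?case
    using div_mod_mult[OF assms
        prime_ideal_power_notin[OF has_uniformizersD(1)[OF assms(1)] assms(2)]]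
    by (simp add: algebra_simps)
qed

lemma principal_divisor_int_multiple:
  assumes I: "has_uniformizers I" and g: "g \<notin> I"
  obtains x y where "x \<notin> I" "y \<notin> I" "(\<lambda>P. div_mod I x P - div_mod I y P) = (\<lambda>P. k * div_mod I g P)"
proof
  show "g ^ nat k \<notin> I" "g ^ nat (- k) \<notin> I"
    using prime_ideal_power_notin[OF has_uniformizersD(1)[OF I] g] by blast+
  show "(\<lambda>P. div_mod I (g ^ nat k) P - div_mod I (g ^ nat (- k)) P) = (\<lambda>P. k * div_mod I g P)"
    using div_mod_power[OF I g] by (simp add: algebra_simps)
qed

lemma principal_divisor_mult:
  assumes I: "has_uniformizers I" and "x \<notin> I" "y \<notin> I" "x' \<notin> I" "y' \<notin> I"
  shows "(div_mod I x P - div_mod I y P) + (div_mod I x' P - div_mod I y' P) =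
    div_mod I (x * x') P - div_mod I (y * y') P"
  using div_mod_mult[OF I assms(2,4)] div_mod_mult[OF I assms(3,5)] by simp


lemma weil_divisors_mod_simps:
  "carrier (weil_divisors_mod I) =
     {D. finite {P. D P \<noteq> 0} \<and> {P. D P \<noteq> 0} \<subseteq> height_one_primes_mod I}"
  "D \<otimes>\<^bsub>weil_divisors_mod I\<^esub> E = (\<lambda>P. D P + E P)"
  "\<one>\<^bsub>weil_divisors_mod I\<^esub> = (\<lambda>P. 0)"
  unfolding weil_divisors_mod_def by simp_all

lemma Zpow_simps:
  "carrier (Zpow s) = {x. \<forall>i\<ge>s. x i = 0}"
  "x \<otimes>\<^bsub>Zpow s\<^esub> y = (\<lambda>i. x i + y i)"
  "\<one>\<^bsub>Zpow s\<^esub> = (\<lambda>i. 0)"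
  unfolding Zpow_def by simp_all

lemma weil_divisors_mod_comm_group: "comm_group (weil_divisors_mod I)"
proof (rule comm_groupI)
  fix D E assume "D \<in> carrier (weil_divisors_mod I)" "E \<in> carrier (weil_divisors_mod I)"
  moreover have "{P. D P + E P \<noteq> (0::int)} \<subseteq> {P. D P \<noteq> 0} \<union> {P. E P \<noteq> 0}" by auto
  ultimately show "D \<otimes>\<^bsub>weil_divisors_mod I\<^esub> E \<in> carrier (weil_divisors_mod I)"
    unfolding weil_divisors_mod_simps by (auto intro: finite_subset)
next
  fix D assume "D \<in> carrier (weil_divisors_mod I)"
  then have "(\<lambda>P. - D P) \<in> carrier (weil_divisors_mod I)"
    and "(\<lambda>P. - D P) \<otimes>\<^bsub>weil_divisors_mod I\<^esub> D = \<one>\<^bsub>weil_divisors_mod I\<^esub>"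
    unfolding weil_divisors_mod_simps by simp_all
  then show "\<exists>E\<in>carrier (weil_divisors_mod I). E \<otimes>\<^bsub>weil_divisors_mod I\<^esub> D = \<one>\<^bsub>weil_divisors_mod I\<^esub>"
    by blast
qed (simp_all add: weil_divisors_mod_simps ac_simps)

lemma Zpow_comm_group: "comm_group (Zpow s)"
proof (rule comm_groupI)
  fix x assume "x \<in> carrier (Zpow s)"
  then have "(\<lambda>i. - x i) \<in> carrier (Zpow s)" "(\<lambda>i. - x i) \<otimes>\<^bsub>Zpow s\<^esub> x = \<one>\<^bsub>Zpow s\<^esub>"
    unfolding Zpow_simps by simp_all
  then show "\<exists>y\<in>carrier (Zpow s). y \<otimes>\<^bsub>Zpow s\<^esub> x = \<one>\<^bsub>Zpow s\<^esub>" by blast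
qed (simp_all add: Zpow_simps ac_simps)

lemma principal_divisor_in_carrier:
  assumes I: "has_uniformizers I" and fin: "finite {P. div_mod I x P \<noteq> 0}"
    "finite {P. div_mod I y P \<noteq> 0}"
  shows "(\<lambda>P. div_mod I x P - div_mod I y P) \<in> carrier (weil_divisors_mod I)"
proof -
  have sub: "{P. div_mod I x P - div_mod I y P \<noteq> 0} \<subseteq>
      {P. div_mod I x P \<noteq> 0} \<union> {P. div_mod I y P \<noteq> 0}"
    by auto
  then have "finite {P. div_mod I x P - div_mod I y P \<noteq> 0}"
    using fin by (meson finite_UnI finite_subset)
  moreover have "{P. div_mod I x P - div_mod I y P \<noteq> 0} \<subseteq> height_one_primes_mod I"
    using sub div_mod_nonzero(2)[OF I] by blast
  ultimately show ?thesis unfolding weil_divisors_mod_simps by blast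
qed

lemma principal_divisors_subgroup:
  assumes I: "has_uniformizers I" and fin: "\<And>x. x \<notin> I \<Longrightarrow> finite {P. div_mod I x P \<noteq> 0}"
  shows "subgroup (principal_divisors_mod I) (weil_divisors_mod I)"
proof -
  interpret W: comm_group "weil_divisors_mod I" by (rule weil_divisors_mod_comm_group)
  have carrier: "(\<lambda>P. div_mod I x P - div_mod I y P) \<in> carrier (weil_divisors_mod I)"
    if "x \<notin> I" "y \<notin> I" for x y
    using principal_divisor_in_carrier[OF I fin[OF that(1)] fin[OF that(2)]] .
  show ?thesis
  proof (rule W.subgroupI)
    show "principal_divisors_mod I \<subseteq> carrier (weil_divisors_mod I)"
      unfolding principal_divisors_mod_def using carrier by blast
    show "principal_divisors_mod I \<noteq> {}"
      unfolding principal_divisors_mod_def using tc_prime_idealD(3)[OF has_uniformizersD(1)[OF I]]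
      by blast
  next
    fix D assume "D \<in> principal_divisors_mod I"
    then obtain x y where h: "x \<notin> I" "y \<notin> I" "D = (\<lambda>P. div_mod I x P - div_mod I y P)"
      unfolding principal_divisors_mod_def by blast
    have "(\<lambda>P. div_mod I y P - div_mod I x P) \<otimes>\<^bsub>weil_divisors_mod I\<^esub> D = \<one>\<^bsub>weil_divisors_mod I\<^esub>"
      unfolding h(3) weil_divisors_mod_simps by simp
    then have "inv\<^bsub>weil_divisors_mod I\<^esub> D = (\<lambda>P. div_mod I y P - div_mod I x P)"
      using W.inv_equality carrier[OF h(1,2)] carrier[OF h(2,1)] unfolding h(3) by blast
    then show "inv\<^bsub>weil_divisors_mod I\<^esub> D \<in> principal_divisors_mod I"
      unfolding principal_divisors_mod_def using h by blast
  next
    fix D E assume "D \<in> principal_divisors_mod I" "E \<in> principal_divisors_mod I"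
    then obtain x y x' y' where h: "x \<notin> I" "y \<notin> I" "D = (\<lambda>P. div_mod I x P - div_mod I y P)"
      "x' \<notin> I" "y' \<notin> I" "E = (\<lambda>P. div_mod I x' P - div_mod I y' P)"
      unfolding principal_divisors_mod_def by blast
    then have "D \<otimes>\<^bsub>weil_divisors_mod I\<^esub> E = (\<lambda>P. div_mod I (x * x') P - div_mod I (y * y') P)"
      unfolding weil_divisors_mod_simps using principal_divisor_mult[OF I] by simp
    moreover have "x * x' \<notin> I" "y * y' \<notin> I"
      using h tc_prime_idealD(4)[OF has_uniformizersD(1)[OF I]] by blast+
    ultimately show "D \<otimes>\<^bsub>weil_divisors_mod I\<^esub> E \<in> principal_divisors_mod I"
      unfolding principal_divisors_mod_def by blast
  qed
qed

lemma rcos_hom_group_hom: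
  assumes G: "group G" and H: "comm_group H" and N: "subgroup N H" and h: "h \<in> hom G H"
  shows "group_hom G (H Mod N) (\<lambda>x. N #>\<^bsub>H\<^esub> h x)"
proof -
  interpret H: comm_group H by (rule H)
  interpret N: normal N H using H.subgroup_imp_normal[OF N] .
  have hc: "h x \<in> carrier H" if "x \<in> carrier G" for x using h that unfolding hom_def by blast
  show ?thesis
  proof (rule group_hom.intro[OF G N.factorgroup_is_group], rule group_hom_axioms.intro, rule homI)
    show "N #>\<^bsub>H\<^esub> h x \<in> carrier (H Mod N)" if "x \<in> carrier G" for x
      unfolding FactGroup_def using H.rcosetsI[OF N.subset hc[OF that]] by simp
    show "N #>\<^bsub>H\<^esub> h (x \<otimes>\<^bsub>G\<^esub> y) = (N #>\<^bsub>H\<^esub> h x) \<otimes>\<^bsub>H Mod N\<^esub> (N #>\<^bsub>H\<^esub> h y)"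
      if "x \<in> carrier G" "y \<in> carrier G" for x y
      using N.rcos_sum[OF hc hc] hom_mult[OF h] that by simp
  qed
qed

lemma quotient_iso_from_hom:
  assumes G: "comm_group G" and H: "comm_group H" and N: "subgroup N H"
    and h: "h \<in> hom G H"
    and onto: "\<And>y. y \<in> carrier H \<Longrightarrow> \<exists>x\<in>carrier G. \<exists>n\<in>N. y = n \<otimes>\<^bsub>H\<^esub> h x"
    and C: "C \<subseteq> carrier G" "\<And>x. x \<in> carrier G \<Longrightarrow> h x \<in> N \<longleftrightarrow> x \<in> C"
  shows "H Mod N \<cong> G Mod C"
proof -
  interpret G: comm_group G by (rule G)
  interpret H: comm_group H by (rule H)
  interpret N: normal N H using H.subgroup_imp_normal[OF N] .
  define \<Phi> where "\<Phi> x = N #>\<^bsub>H\<^esub> h x" for x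
  have hc: "h x \<in> carrier H" if "x \<in> carrier G" for x using h that unfolding hom_def by blast
  have hom: "group_hom G (H Mod N) \<Phi>"
    unfolding \<Phi>_def by (rule rcos_hom_group_hom[OF G.is_group H N h])
  have "\<Phi> ` carrier G = carrier (H Mod N)"
  proof
    show "\<Phi> ` carrier G \<subseteq> carrier (H Mod N)" using group_hom.hom_closed[OF hom] by blast
    show "carrier (H Mod N) \<subseteq> \<Phi> ` carrier G"
    proof
      fix Y assume "Y \<in> carrier (H Mod N)"
      then obtain y where y: "y \<in> carrier H" "Y = N #>\<^bsub>H\<^esub> y"
        unfolding FactGroup_def RCOSETS_def by auto
      obtain x n where x: "x \<in> carrier G" "n \<in> N" "y = n \<otimes>\<^bsub>H\<^esub> h x" using onto[OF y(1)] by blast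
      have "N #>\<^bsub>H\<^esub> y = (N #>\<^bsub>H\<^esub> n) #>\<^bsub>H\<^esub> h x"
        using H.coset_mult_assoc[OF N.subset _ hc[OF x(1)], of n] N.subset x by auto
      also have "N #>\<^bsub>H\<^esub> n = N" using N.rcos_const[OF H.is_group x(2)] .
      finally show "Y \<in> \<Phi> ` carrier G" using y x(1) unfolding \<Phi>_def by blast
    qed
  qed
  moreover have ker: "kernel G (H Mod N) \<Phi> = C"
  proof -
    have "\<Phi> x = N \<longleftrightarrow> h x \<in> N" if "x \<in> carrier G" for x
      unfolding \<Phi>_def using H.rcos_self[OF hc[OF that] N.subgroup_axioms]
        N.rcos_const[OF H.is_group] by auto
    then show ?thesis unfolding kernel_def using C by auto
  qed
  ultimately have "G Mod C \<cong> H Mod N" using group_hom.FactGroup_iso[OF hom] by simp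
  moreover have "group (G Mod C)"
    using normal.factorgroup_is_group[OF group_hom.normal_kernel[OF hom]] unfolding ker .
  ultimately show ?thesis using group.iso_sym by blast
qed


lemma prime_element_iff_prime_elem: "prime_element p \<longleftrightarrow> prime_elem p"
  unfolding prime_element_def prime_elem_def ..

lemma prime_elem_dvd_prod_list:
  assumes "prime_elem p" "p dvd prod_list ps"
  shows "\<exists>q\<in>set ps. p dvd q"
  using assms(2)
proof (induction ps)
  case Nil
  then show ?case using prime_elem_not_unit[OF assms(1)] by simp
next
  case (Cons a ps)
  then show ?case using prime_elem_dvd_multD[OF assms(1), of a "prod_list ps"] by auto
qed

lemma prime_elem_dvd_prod:
  assumes "prime_elem p" "finite A" "p dvd prod g A"
  shows "\<exists>x\<in>A. p dvd g x"
  using assms(2,3)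
proof (induction A rule: finite_induct)
  case empty
  then show ?case using prime_elem_not_unit[OF assms(1)] by simp
next
  case (insert x F)
  then show ?case using prime_elem_dvd_multD[OF assms(1), of "g x" "prod g F"] by auto
qed

lemma prod_list_remove1:
  "q \<in> set ps \<Longrightarrow> prod_list (ps::'a::comm_monoid_mult list) = q * prod_list (remove1 q ps)"
  by (induction ps) (auto simp: ac_simps)

lemma prime_elem_dvd_prime_elem:
  assumes "prime_elem (p::'a::idom)" "prime_elem q" "p dvd q"
  obtains c where "c dvd 1" "q = p * c"
proof -
  obtain c where c: "q = p * c" using assms(3) by blast
  have q0: "q \<noteq> 0" using prime_elem_not_zeroI[OF assms(2)] .
  have "q dvd p * c" using c by simp
  then have "q dvd p \<or> q dvd c" by (rule prime_elem_dvd_multD[OF assms(2)])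
  then have "c dvd 1"
  proof
    assume "q dvd p"
    then obtain d where d: "p = q * d" by blast
    have "q * (d * c) = (q * d) * c" by (simp add: ac_simps)
    also have "\<dots> = q * 1" using c d by simp
    finally have "q * (d * c) = q * 1" .
    then show "c dvd 1" using q0 by (metis dvd_triv_right mult_left_cancel)
  next
    assume "q dvd c"
    then obtain e where e: "c = q * e" by blast
    have "q * (p * e) = p * (q * e)" by (simp add: ac_simps)
    also have "\<dots> = q * 1" using c e by simp
    finally have "q * (p * e) = q * 1" .
    then show "c dvd 1" using q0 prime_elem_not_unit[OF assms(1)]
      by (metis dvd_triv_left mult_left_cancel)
  qed
  with c show thesis using that by blast
qed

lemma prime_elem_dvd_prime_elem_sym:
  assumes "prime_elem (p::'a::idom)" "prime_elem q" "p dvd q"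
  shows "q dvd p"
proof -
  obtain c where c: "c dvd 1" "q = p * c" using prime_elem_dvd_prime_elem[OF assms] by blast
  then obtain e where "1 = c * e" by blast
  then have "p = q * e" using c(2) by (metis mult.assoc mult_1_right)
  then show ?thesis by simp
qed

lemma unit_prime_factorization:
  assumes "factorial_domain TYPE('r::idom)" "(r::'r) \<noteq> 0"
  obtains ps u where "u dvd 1" "\<forall>p\<in>set ps. prime_elem p" "r = u * prod_list ps"
proof (cases "r dvd 1")
  case True
  then show thesis using that[of r "[]"] by simp
next
  case False
  then obtain ps where "\<forall>p\<in>set ps. prime_elem p" "r = prod_list ps"
    using assms unfolding factorial_domain_def prime_element_iff_prime_elem by blast
  then show thesis using that[of 1 ps] by simp
qed

text \<open>A measure for descent arguments; it needs only the existence of prime factorizations,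
  not their uniqueness.\<close>

definition factor_length :: "'r::idom \<Rightarrow> nat" where
  "factor_length r = (LEAST k. \<exists>ps u. length ps = k \<and> u dvd 1 \<and> (\<forall>p\<in>set ps. prime_elem p) \<and>
     r = u * prod_list ps)"

lemma factor_length_witness:
  assumes "factorial_domain TYPE('r::idom)" "(r::'r) \<noteq> 0"
  obtains ps u where "length ps = factor_length r" "u dvd 1" "\<forall>p\<in>set ps. prime_elem p"
    "r = u * prod_list ps"
proof -
  let ?P = "\<lambda>k. \<exists>ps u. length ps = k \<and> u dvd 1 \<and> (\<forall>p\<in>set ps. prime_elem p) \<and> r = u * prod_list ps"
  obtain ps u where "u dvd 1" "\<forall>p\<in>set ps. prime_elem p" "r = u * prod_list ps"
    by (rule unit_prime_factorization[OF assms])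
  then have "?P (length ps)" by auto
  then have "?P (factor_length r)" unfolding factor_length_def by (rule LeastI)
  then show thesis using that by auto
qed

lemma factor_length_le:
  assumes "u dvd 1" "\<forall>p\<in>set ps. prime_elem p" "r = u * prod_list ps"
  shows "factor_length r \<le> length ps"
  unfolding factor_length_def using assms by (intro Least_le) blast

lemma factor_length_less:
  assumes fd: "factorial_domain TYPE('r::idom)" and p: "prime_elem (p::'r)" and r: "p * r \<noteq> 0"
  shows "factor_length r < factor_length (p * r)"
proof -
  obtain ps u where h: "length ps = factor_length (p * r)" "u dvd 1" "\<forall>p\<in>set ps. prime_elem p"
    "p * r = u * prod_list ps"
    by (rule factor_length_witness[OF fd r])
  have "\<not> p dvd u" using dvd_trans[of p u 1] h(2) prime_elem_not_unit[OF p] by blast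
  moreover have "p dvd u * prod_list ps" using h(4) by (metis dvd_triv_left)
  ultimately obtain q where q: "q \<in> set ps" "p dvd q"
    using prime_elem_dvd_prod_list[OF p] prime_elem_dvd_multD[OF p] by blast
  have "prime_elem q" using h(3) q(1) by blast
  then obtain c where c: "c dvd 1" "q = p * c" by (rule prime_elem_dvd_prime_elem[OF p _ q(2)])
  have "p * r = u * (q * prod_list (remove1 q ps))"
    by (simp only: h(4) prod_list_remove1[OF q(1)])
  also have "\<dots> = p * (u * c * prod_list (remove1 q ps))" by (simp add: c(2) ac_simps)
  finally have "p * r = p * (u * c * prod_list (remove1 q ps))" .
  then have "r = (u * c) * prod_list (remove1 q ps)" using prime_elem_not_zeroI[OF p] by simp
  moreover have "u * c dvd 1" using mult_dvd_mono[OF h(2) c(1)] by simp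
  moreover have "\<forall>p\<in>set (remove1 q ps). prime_elem p" using h(3) set_remove1_subset[of q ps]
    by blast
  ultimately have "factor_length r \<le> length (remove1 q ps)" using factor_length_le by blast
  also have "\<dots> < factor_length (p * r)" using h(1) q(1) length_pos_if_in_set[OF q(1)]
    by (simp add: length_remove1)
  finally show ?thesis .
qed

lemma power_factor_decomp:
  fixes p :: "'a::idom" and m :: "'a \<Rightarrow> nat"
  assumes m: "\<And>y. p * y \<noteq> 0 \<Longrightarrow> m y < m (p * y)"
  shows "x \<noteq> 0 \<Longrightarrow> \<exists>n y. x = p ^ n * y \<and> \<not> p dvd y"
proof (induction "m x" arbitrary: x rule: less_induct)
  case less
  show ?case
  proof (cases "p dvd x")
    case True
    then obtain y where y: "x = p * y" by blast
    then have "m y < m x" "y \<noteq> 0" using m less.prems by auto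
    then obtain n z where "y = p ^ n * z" "\<not> p dvd z" using less.hyps by blast
    then show ?thesis using y by (intro exI[of _ "Suc n"] exI[of _ z]) simp
  qed (intro exI[of _ 0] exI[of _ x]; simp)
qed

lemma prime_power_decomp:
  assumes "factorial_domain TYPE('r::idom)" "prime_elem (p::'r)" "r \<noteq> 0"
  shows "\<exists>n r'. r = p ^ n * r' \<and> \<not> p dvd r'"
  using power_factor_decomp[of p factor_length] factor_length_less[OF assms(1,2)] assms(3) by blast

lemma const_prime_power_decomp:
  assumes "factorial_domain TYPE('r::idom)" "prime_elem (p::'r)" "(y::'r poly) \<noteq> 0"
  shows "\<exists>n y'. y = [:p:] ^ n * y' \<and> \<not> [:p:] dvd y'"
proof (rule power_factor_decomp[of "[:p:]" "\<lambda>y. factor_length (lead_coeff y)"])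
  show "factor_length (lead_coeff z) < factor_length (lead_coeff ([:p:] * z))" if "[:p:] * z \<noteq> 0"
    for z
    using factor_length_less[OF assms(1,2), of "lead_coeff z"] that by (simp add: lead_coeff_mult)
qed (rule assms(3))

lemma const_primitive_decomp:
  assumes fd: "factorial_domain TYPE('r::idom)"
  shows "(z::'r poly) \<noteq> 0 \<Longrightarrow> \<exists>c z'. c \<noteq> 0 \<and> z = [:c:] * z' \<and> (\<forall>p. prime_elem p \<longrightarrow> \<not> [:p:] dvd z')"
proof (induction "factor_length (lead_coeff z)" arbitrary: z rule: less_induct)
  case less
  show ?case
  proof (cases "\<exists>p. prime_elem p \<and> [:p:] dvd z")
    case True
    then obtain p y where p: "prime_elem p" and y: "z = [:p:] * y" by blast
    then have "factor_length (lead_coeff y) < factor_length (lead_coeff z)" "y \<noteq> 0"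
      using factor_length_less[OF fd p, of "lead_coeff y"] less.prems
        by (auto simp: lead_coeff_mult)
    then obtain c z' where h: "c \<noteq> 0" "y = [:c:] * z'" "\<forall>p. prime_elem p \<longrightarrow> \<not> [:p:] dvd z'"
      using less.hyps by blast
    then have "z = [:p * c:] * z'" using y by (simp add: algebra_simps)
    then show ?thesis using h p by (intro exI[of _ "p * c"] exI[of _ z']) simp
  qed (intro exI[of _ 1] exI[of _ z]; auto)
qed


section \<open>Height-one primes of a polynomial ring over a factorial domain\<close>

definition min_nonzero_prime :: "'a::comm_ring_1 set \<Rightarrow> bool" where
  "min_nonzero_prime q \<longleftrightarrow> tc_prime_ideal q \<and> (\<exists>y\<in>q. y \<noteq> 0) \<and>
     (\<forall>q'. tc_prime_ideal q' \<and> (\<exists>y\<in>q'. y \<noteq> 0) \<and> q' \<subseteq> q \<longrightarrow> q' = q)"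

lemma min_nonzero_primeD:
  assumes "min_nonzero_prime q"
  shows "tc_prime_ideal q" "\<exists>y\<in>q. y \<noteq> 0"
    "\<And>q'. tc_prime_ideal q' \<Longrightarrow> y \<in> q' \<Longrightarrow> y \<noteq> 0 \<Longrightarrow> q' \<subseteq> q \<Longrightarrow> q' = q"
  using assms unfolding min_nonzero_prime_def by blast+

definition const_dvd_ideal :: "'r::comm_ring_1 \<Rightarrow> 'r poly set" where
  "const_dvd_ideal p = {y. [:p:] dvd y}"

definition fract_dvd_ideal :: "'r::idom fract poly \<Rightarrow> 'r poly set" where
  "fract_dvd_ideal P = {y. P dvd fract_poly y}"

lemma const_dvd_ideal_prime:
  assumes "prime_elem (p::'r::idom)"
  shows "tc_prime_ideal (const_dvd_ideal p)"
  unfolding tc_prime_ideal_def const_dvd_ideal_def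
proof (intro conjI allI impI)
  have pp: "prime_elem [:p:]" using assms by (simp add: prime_elem_const_poly_iff)
  show "tc_ideal {y. [:p:] dvd y}" by (rule tc_ideal_multiples)
  show "{y. [:p:] dvd y} \<noteq> UNIV" using prime_elem_not_unit[OF pp] by auto
  show "x \<in> {y. [:p:] dvd y} \<or> y \<in> {y. [:p:] dvd y}" if "x * y \<in> {y. [:p:] dvd y}" for x y
    using prime_elem_dvd_multD[OF pp] that by simp
qed

lemma const_in_const_dvd_ideal: "[:p:] \<in> const_dvd_ideal p"
  by (simp add: const_dvd_ideal_def)

lemma const_dvd_ideal_subset: "tc_ideal q \<Longrightarrow> [:p:] \<in> q \<Longrightarrow> const_dvd_ideal p \<subseteq> q"
  unfolding const_dvd_ideal_def using tc_idealD(4) by blast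

lemma prime_ideal_const_prime:
  assumes fd: "factorial_domain TYPE('r::idom)" and q: "tc_prime_ideal q"
    and r: "[:r:] \<in> q" "(r::'r) \<noteq> 0"
  obtains p where "prime_elem p" "[:p:] \<in> q"
proof -
  obtain ps u where ps: "u dvd 1" "\<forall>p\<in>set ps. prime_elem p" "r = u * prod_list ps"
    by (rule unit_prime_factorization[OF fd r(2)])
  have "[:prod_list xs:] = prod_list (map (\<lambda>p. [:p:]) xs)" for xs :: "'r list"
  proof (induction xs)
    case (Cons a xs)
    then show ?case by (simp flip: Cons.IH)
  qed simp
  note const_prod = this
  have "[:r:] = [:u:] * [:prod_list ps:]" unfolding ps(3) by simp
  also have "\<dots> = [:u:] * prod_list (map (\<lambda>p. [:p:]) ps)" by (simp only: const_prod)
  finally have "[:u:] * prod_list (map (\<lambda>p. [:p:]) ps) \<in> q" using r(1) by simp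
  moreover have "[:u:] \<notin> q"
  proof
    assume "[:u:] \<in> q"
    obtain v where "1 = u * v" by (rule dvdE[OF ps(1)])
    then have "[:v:] * [:u:] = 1" by (simp add: ac_simps)
    moreover have "[:v:] * [:u:] \<in> q" using tc_idealD(3)[OF tc_prime_idealD(1)[OF q] \<open>[:u:] \<in> q\<close>] .
    ultimately show False using tc_prime_idealD(3)[OF q] by simp
  qed
  ultimately have "prod_list (map (\<lambda>p. [:p:]) ps) \<in> q" using tc_prime_idealD(2)[OF q] by blast
  then obtain x where "x \<in> set (map (\<lambda>p. [:p:]) ps)" "x \<in> q"
    using prime_ideal_prod_list[OF q] by blast
  then show thesis using ps(2) that by auto
qed

lemma const_dvd_ideal_minimal:
  assumes fd: "factorial_domain TYPE('r::idom)" and p: "prime_elem (p::'r)"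
    and q': "tc_prime_ideal q'" "y \<in> q'" "y \<noteq> 0" "q' \<subseteq> const_dvd_ideal p"
  shows "q' = const_dvd_ideal p"
proof (cases "\<exists>r. r \<noteq> 0 \<and> [:r:] \<in> q'")
  case True
  then obtain r where r: "r \<noteq> 0" "[:r:] \<in> q'" by blast
  obtain p' where p': "prime_elem p'" "[:p':] \<in> q'"
    by (rule prime_ideal_const_prime[OF fd q'(1) r(2,1)])
  then have "p dvd p'" using q'(4) unfolding const_dvd_ideal_def by auto
  then have "p' dvd p" by (rule prime_elem_dvd_prime_elem_sym[OF p p'(1)])
  then obtain c where "p = p' * c" by (rule dvdE)
  then have "[:c:] * [:p':] = [:p:]" by (simp add: ac_simps)
  moreover have "[:c:] * [:p':] \<in> q'" using tc_idealD(3)[OF tc_prime_idealD(1)[OF q'(1)] p'(2)] .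
  ultimately have "[:p:] \<in> q'" by simp
  then show ?thesis using const_dvd_ideal_subset[OF tc_prime_idealD(1)[OF q'(1)]] q'(4) by blast
next
  case False
  obtain n y' where h: "y = [:p:] ^ n * y'" "\<not> [:p:] dvd y'"
    using const_prime_power_decomp[OF fd p q'(3)] by auto
  have "[:p:] \<notin> q'" using False prime_elem_not_zeroI[OF p] by blast
  then have "[:p:] ^ n \<notin> q'" by (rule prime_ideal_power_notin[OF q'(1)])
  then have "y' \<in> q'" using tc_prime_idealD(2)[OF q'(1)] h(1) q'(2) by blast
  then show ?thesis using q'(4) h(2) unfolding const_dvd_ideal_def by blast
qed

lemma min_nonzero_prime_const_dvd_ideal:
  assumes "factorial_domain TYPE('r::idom)" "prime_elem (p::'r)"
  shows "min_nonzero_prime (const_dvd_ideal p)"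
  unfolding min_nonzero_prime_def
proof (intro conjI allI impI)
  show "tc_prime_ideal (const_dvd_ideal p)" using const_dvd_ideal_prime[OF assms(2)] .
  show "\<exists>y\<in>const_dvd_ideal p. y \<noteq> 0"
    using const_in_const_dvd_ideal[of p] prime_elem_not_zeroI[OF assms(2)]
    by (intro bexI[of _ "[:p:]"]) simp_all
  show "q' = const_dvd_ideal p"
    if "tc_prime_ideal q' \<and> (\<exists>y\<in>q'. y \<noteq> 0) \<and> q' \<subseteq> const_dvd_ideal p" for q'
    using that const_dvd_ideal_minimal[OF assms] by blast
qed

lemma degree_fract_poly [simp]: "degree (fract_poly y) = degree y"
  by (rule degree_map_poly) simp

lemma fract_poly_power: "fract_poly (t ^ n) = fract_poly t ^ n"
  by (induction n) simp_all

lemma fract_poly_clear_denom: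
  fixes Y :: "'r::idom fract poly"
  obtains d z where "d \<noteq> 0" "smult (to_fract d) Y = fract_poly z"
proof -
  have "\<exists>d z. d \<noteq> 0 \<and> smult (to_fract d) Y = fract_poly z"
  proof (induction Y rule: pCons_induct)
    case 0
    show ?case by (intro exI[of _ 1] exI[of _ 0]) simp
  next
    case (pCons a Y)
    then obtain d z where dz: "d \<noteq> 0" "smult (to_fract d) Y = fract_poly z" by blast
    obtain n m where a: "a = Fract n m" "m \<noteq> 0" by (cases a) blast
    have "to_fract (d * m) * a = to_fract (n * d)"
      using a by (simp add: Fract_conv_to_fract ac_simps)
    moreover have "smult (to_fract (d * m)) Y = fract_poly (smult m z)"
      using dz(2) by (simp add: mult.commute[of d m] smult_smult[symmetric])
    ultimately have "smult (to_fract (d * m)) (pCons a Y) = fract_poly (pCons (n * d) (smult m z))"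
      by (simp add: map_poly_pCons)
    moreover have "d * m \<noteq> 0" using dz(1) a(2) by simp
    ultimately show ?case by blast
  qed
  then show thesis using that by blast
qed

lemma fract_poly_factor_lift:
  assumes "fract_poly y = fract_poly z * M"
  obtains d m where "d \<noteq> 0" "smult d y = z * m" "fract_poly m = smult (to_fract d) M"
proof -
  obtain d m where dm: "d \<noteq> 0" "smult (to_fract d) M = fract_poly m"
    by (rule fract_poly_clear_denom)
  have "fract_poly (smult d y) = fract_poly (z * m)"
    using assms dm(2)[symmetric] by (simp add: ac_simps)
  then have "smult d y = z * m" by (simp only: fract_poly_eq_iff)
  then show thesis using that dm(1) dm(2)[symmetric] by blast
qed

lemma fract_dvd_ideal_prime:
  assumes "prime_elem P"
  shows "tc_prime_ideal (fract_dvd_ideal P)"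
  unfolding tc_prime_ideal_def tc_ideal_def fract_dvd_ideal_def
proof (intro conjI ballI allI impI)
  have "1 \<notin> {y. P dvd fract_poly y}" using prime_elem_not_unit[OF assms] by simp
  then show "{y. P dvd fract_poly y} \<noteq> UNIV" by blast
  show "x \<in> {y. P dvd fract_poly y} \<or> y \<in> {y. P dvd fract_poly y}"
    if "x * y \<in> {y. P dvd fract_poly y}" for x y
    using that prime_elem_dvd_multD[OF assms] by simp
qed (simp_all add: dvd_add dvd_mult)

lemma fract_dvd_idealI: "fract_poly z = smult (to_fract d) P \<Longrightarrow> z \<in> fract_dvd_ideal P"
  unfolding fract_dvd_ideal_def by (simp add: dvd_smult)

lemma fract_dvd_ideal_witness:
  assumes "prime_elem (P::'r::idom fract poly)"
  obtains d z where "d \<noteq> 0" "z \<noteq> 0" "fract_poly z = smult (to_fract d) P"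
proof -
  obtain d z where dz: "d \<noteq> 0" "smult (to_fract d) P = fract_poly z"
    by (rule fract_poly_clear_denom)
  then have "z \<noteq> 0" using prime_elem_not_zeroI[OF assms] by auto
  then show thesis using that dz(1) dz(2)[symmetric] by blast
qed

lemma const_notin_fract_dvd_ideal:
  assumes "prime_elem P" "r \<noteq> 0"
  shows "[:r:] \<notin> fract_dvd_ideal P"
proof
  assume "[:r:] \<in> fract_dvd_ideal P"
  then have "P dvd [:to_fract r:]" unfolding fract_dvd_ideal_def by (simp add: map_poly_pCons)
  moreover have "is_unit [:to_fract r:]" using assms(2) by (simp add: is_unit_triv)
  ultimately show False using assms(1) prime_elem_not_unit dvd_unit_imp_unit by blast
qed

lemma fract_dvd_ideal_subset:
  assumes q: "tc_prime_ideal q" and nc: "\<forall>r. [:r:] \<in> q \<longrightarrow> r = 0"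
    and z: "z \<in> q" "fract_poly z = smult (to_fract d) P" "d \<noteq> 0"
  shows "fract_dvd_ideal P \<subseteq> q"
proof
  fix x assume "x \<in> fract_dvd_ideal P"
  then obtain X where "fract_poly x = P * X" unfolding fract_dvd_ideal_def by blast
  then have "fract_poly (smult d x) = fract_poly z * X" using z(2) by simp
  then obtain d' m where dm: "d' \<noteq> 0" "smult d' (smult d x) = z * m"
    by (rule fract_poly_factor_lift)
  then have "[:d' * d:] * x \<in> q" using tc_idealD(4)[OF tc_prime_idealD(1)[OF q] z(1)] by simp
  moreover have "[:d' * d:] \<notin> q" using nc dm(1) z(3) by auto
  ultimately show "x \<in> q" using tc_prime_idealD(2)[OF q] by blast
qed

lemma prime_ideal_contains_fract_dvd_ideal:
  fixes q :: "'r::idom poly set"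
  assumes q: "tc_prime_ideal q" and nc: "\<forall>r. [:r:] \<in> q \<longrightarrow> r = 0"
  shows "y \<in> q \<Longrightarrow> y \<noteq> 0 \<Longrightarrow> \<exists>P. prime_elem P \<and> fract_dvd_ideal P \<subseteq> q"
proof (induction "degree y" arbitrary: y rule: less_induct)
  case less
  have "degree y \<noteq> 0"
  proof
    assume "degree y = 0"
    then have "[:coeff y 0:] = y" by (rule degree_0_id)
    then show False using nc less.prems by (metis pCons_0_0)
  qed
  then have "\<not> is_unit (fract_poly y)" using less.prems(2) by (simp add: is_unit_iff_degree)
  then obtain P where P: "P dvd fract_poly y" "prime P"
    using prime_divisor_exists[of "fract_poly y"] less.prems(2) by auto
  then have Pe: "prime_elem P" by blast
  obtain M where M: "fract_poly y = P * M" using P(1) by blast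
  obtain d z where dz: "d \<noteq> 0" "z \<noteq> 0" "fract_poly z = smult (to_fract d) P"
    by (rule fract_dvd_ideal_witness[OF Pe])
  have "fract_poly (smult d y) = fract_poly z * M" using M dz(3) by simp
  then obtain d' m where dm: "d' \<noteq> 0" "smult d' (smult d y) = z * m"
    "fract_poly m = smult (to_fract d') M"
    by (rule fract_poly_factor_lift)
  have "[:d' * d:] * y \<in> q" using tc_idealD(3)[OF tc_prime_idealD(1)[OF q] less.prems(1)] .
  then have "z \<in> q \<or> m \<in> q" using dm(2) tc_prime_idealD(2)[OF q] by simp
  then show ?case
  proof
    assume "z \<in> q"
    then show ?thesis using fract_dvd_ideal_subset[OF q nc _ dz(3,1)] Pe by blast
  next
    assume mq: "m \<in> q"
    have "degree m = degree M" using arg_cong[OF dm(3), of degree] dm(1) by simp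
    moreover have "M \<noteq> 0" using M less.prems(2) by auto
    ultimately have "degree (fract_poly y) = degree P + degree m"
      using M degree_mult_eq[of P M] prime_elem_not_zeroI[OF Pe] by simp
    moreover have "degree P \<noteq> 0"
      using is_unit_iff_degree[of P] prime_elem_not_unit[OF Pe] prime_elem_not_zeroI[OF Pe] by auto
    ultimately have "degree m < degree y" by simp
    moreover have "m \<noteq> 0" using dm(2) less.prems(2) dm(1) dz(1) by auto
    ultimately show ?thesis using less.hyps mq by blast
  qed
qed

lemma fract_dvd_ideal_assoc:
  assumes "prime_elem P" "prime_elem P'" "P dvd P'"
  shows "fract_dvd_ideal P = fract_dvd_ideal P'"
proof -
  obtain c where "c dvd 1" "P' = P * c" by (rule prime_elem_dvd_prime_elem[OF assms])
  then show ?thesis unfolding fract_dvd_ideal_def by (simp add: mult_unit_dvd_iff)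
qed

lemma fract_dvd_ideal_minimal:
  assumes P: "prime_elem (P::'r::idom fract poly)"
    and q': "tc_prime_ideal q'" "y \<in> q'" "y \<noteq> 0" "q' \<subseteq> fract_dvd_ideal P"
  shows "q' = fract_dvd_ideal P"
proof -
  have nc: "\<forall>r. [:r:] \<in> q' \<longrightarrow> r = 0" using const_notin_fract_dvd_ideal[OF P] q'(4) by blast
  obtain P' where P': "prime_elem P'" "fract_dvd_ideal P' \<subseteq> q'"
    using prime_ideal_contains_fract_dvd_ideal[OF q'(1) nc q'(2,3)] by blast
  obtain d z where dz: "d \<noteq> 0" "z \<noteq> 0" "fract_poly z = smult (to_fract d) P'"
    by (rule fract_dvd_ideal_witness[OF P'(1)])
  have "z \<in> fract_dvd_ideal P" using fract_dvd_idealI[OF dz(3)] P'(2) q'(4) by blast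
  then have "P dvd smult (to_fract d) P'" using dz(3) unfolding fract_dvd_ideal_def by simp
  then have "P dvd P'" using dz(1) by (simp add: dvd_smult_iff)
  then show ?thesis using fract_dvd_ideal_assoc[OF P P'(1)] P'(2) q'(4) by blast
qed

lemma min_nonzero_prime_fract_dvd_ideal:
  assumes "prime_elem (P::'r::idom fract poly)"
  shows "min_nonzero_prime (fract_dvd_ideal P)"
proof -
  obtain d z where "z \<noteq> 0" "fract_poly z = smult (to_fract d) P"
    using fract_dvd_ideal_witness[OF assms] by metis
  then show ?thesis
    unfolding min_nonzero_prime_def
    using fract_dvd_idealI fract_dvd_ideal_prime[OF assms] fract_dvd_ideal_minimal[OF assms]
      by blast
qed

lemma min_nonzero_prime_cases:
  assumes fd: "factorial_domain TYPE('r::idom)" and q: "min_nonzero_prime (q::'r poly set)"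
  obtains p where "prime_elem p" "q = const_dvd_ideal p"
  | P where "prime_elem P" "q = fract_dvd_ideal P"
proof (cases "\<exists>r. r \<noteq> 0 \<and> [:r:] \<in> q")
  case True
  then obtain r where r: "r \<noteq> 0" "[:r:] \<in> q" by blast
  obtain p where p: "prime_elem p" "[:p:] \<in> q"
    by (rule prime_ideal_const_prime[OF fd min_nonzero_primeD(1)[OF q] r(2,1)])
  have "const_dvd_ideal p = q"
    using min_nonzero_primeD(3)[OF q const_dvd_ideal_prime[OF p(1)] const_in_const_dvd_ideal]
      const_dvd_ideal_subset[OF tc_prime_idealD(1)[OF min_nonzero_primeD(1)[OF q]] p(2)]
      prime_elem_not_zeroI[OF p(1)] by simp
  then show thesis using that(1) p(1) by blast
next
  case False
  obtain y where "y \<in> q" "y \<noteq> 0" using min_nonzero_primeD(2)[OF q] by blast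
  then obtain P where P: "prime_elem P" "fract_dvd_ideal P \<subseteq> q"
    using prime_ideal_contains_fract_dvd_ideal[OF min_nonzero_primeD(1)[OF q]] False by blast
  obtain d z where "d \<noteq> 0" "z \<noteq> 0" "fract_poly z = smult (to_fract d) P"
    by (rule fract_dvd_ideal_witness[OF P(1)])
  then have "fract_dvd_ideal P = q"
    using min_nonzero_primeD(3)[OF q fract_dvd_ideal_prime[OF P(1)] fract_dvd_idealI] P(2) by blast
  then show thesis using that(2) P(1) by blast
qed


text \<open>A uniformizer of the height-one prime q that in addition lies in no other height-one
  prime.\<close>

definition separating_uniformizer :: "'a::comm_ring_1 set \<Rightarrow> 'a \<Rightarrow> bool" where
  "separating_uniformizer q t \<longleftrightarrow> t \<in> q \<and>
     (\<forall>y. y \<noteq> 0 \<longrightarrow> (\<exists>e n m. e \<notin> q \<and> m \<notin> q \<and> e * y = t ^ n * m)) \<and>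
     (\<forall>q'. min_nonzero_prime q' \<longrightarrow> t \<in> q' \<longrightarrow> q' = q)"

lemma separating_uniformizer_const_dvd_ideal:
  assumes fd: "factorial_domain TYPE('r::idom)" and p: "prime_elem (p::'r)"
  shows "separating_uniformizer (const_dvd_ideal p) [:p:]"
  unfolding separating_uniformizer_def
proof (intro conjI allI impI)
  show "[:p:] \<in> const_dvd_ideal p" by (rule const_in_const_dvd_ideal)
next
  fix y :: "'r poly" assume "y \<noteq> 0"
  then obtain n y' where h: "y = [:p:] ^ n * y'" "\<not> [:p:] dvd y'"
    using const_prime_power_decomp[OF fd p] by blast
  have "1 \<notin> const_dvd_ideal p" using tc_prime_idealD(3)[OF const_dvd_ideal_prime[OF p]] .
  moreover have "y' \<notin> const_dvd_ideal p" using h(2) unfolding const_dvd_ideal_def by simp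
  moreover have "1 * y = [:p:] ^ n * y'" using h(1) by simp
  ultimately show "\<exists>e n m. e \<notin> const_dvd_ideal p \<and> m \<notin> const_dvd_ideal p \<and> e * y = [:p:] ^ n * m"
    by blast
next
  fix q' assume q': "min_nonzero_prime q'" "[:p:] \<in> q'"
  have "const_dvd_ideal p \<subseteq> q'"
    using const_dvd_ideal_subset[OF tc_prime_idealD(1)[OF min_nonzero_primeD(1)[OF q'(1)]] q'(2)] .
  then have "const_dvd_ideal p = q'"
    using min_nonzero_primeD(3)[OF q'(1) const_dvd_ideal_prime[OF p] const_in_const_dvd_ideal]
      prime_elem_not_zeroI[OF p] by simp
  then show "q' = const_dvd_ideal p" ..
qed

lemma fract_prime_primitive_multiple:
  assumes fd: "factorial_domain TYPE('r::idom)" and P: "prime_elem (P::'r fract poly)"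
  obtains t \<kappa> where "\<kappa> \<noteq> 0" "fract_poly t = smult \<kappa> P" "\<And>p. prime_elem p \<Longrightarrow> \<not> [:p:] dvd t"
proof -
  obtain d z where dz: "d \<noteq> 0" "z \<noteq> 0" "fract_poly z = smult (to_fract d) P"
    by (rule fract_dvd_ideal_witness[OF P])
  obtain c t where ct: "c \<noteq> 0" "z = [:c:] * t" "\<forall>p. prime_elem p \<longrightarrow> \<not> [:p:] dvd t"
    using const_primitive_decomp[OF fd dz(2)] by auto
  define \<kappa> where "\<kappa> = to_fract d / to_fract c"
  have "smult (to_fract c) (fract_poly t) = smult (to_fract d) P" using dz(3) ct(2) by simp
  then have "smult (inverse (to_fract c)) (smult (to_fract c) (fract_poly t)) =
      smult (inverse (to_fract c)) (smult (to_fract d) P)"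
    by simp
  then have "fract_poly t = smult \<kappa> P" using ct(1) by (simp add: \<kappa>_def field_simps)
  moreover have "\<kappa> \<noteq> 0" using dz(1) ct(1) by (simp add: \<kappa>_def)
  ultimately show thesis using that ct(3) by blast
qed

lemma multiplicity_smult_prime_elem:
  assumes "prime_elem (P::'a::field_gcd poly)" "\<kappa> \<noteq> 0"
  shows "multiplicity P (smult \<kappa> P) = 1"
proof -
  have "multiplicity P ([:\<kappa>:] * P) = multiplicity P P"
    using assms(2) by (intro multiplicity_times_unit_right) (simp add: is_unit_triv)
  then show ?thesis
    using multiplicity_self[OF prime_elem_not_zeroI[OF assms(1)] prime_elem_not_unit[OF assms(1)]]
      by simp
qed

text \<open>Descent on the multiplicity of P: dividing y by t over Frac(R) costs only a nonzero
  constant denominator, which lies outside the ideal.\<close>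

lemma fract_dvd_ideal_power_factor:
  assumes P: "prime_elem (P::'r::idom fract poly)" and \<kappa>: "\<kappa> \<noteq> 0"
    and t: "fract_poly t = smult \<kappa> P"
  shows "y \<noteq> 0 \<Longrightarrow> \<exists>e n m. e \<notin> fract_dvd_ideal P \<and> m \<notin> fract_dvd_ideal P \<and> e * y = t ^ n * m"
proof (induction "multiplicity P (fract_poly y)" arbitrary: y rule: less_induct)
  case less
  have q: "tc_prime_ideal (fract_dvd_ideal P)" by (rule fract_dvd_ideal_prime[OF P])
  show ?case
  proof (cases "P dvd fract_poly y")
    case False
    then have "y \<notin> fract_dvd_ideal P" "1 * y = t ^ 0 * y" unfolding fract_dvd_ideal_def by simp_all
    then show ?thesis using tc_prime_idealD(3)[OF q] by blast
  next
    case True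
    then have "fract_poly t dvd fract_poly y" unfolding t using \<kappa> by (simp add: smult_dvd)
    then obtain M where M: "fract_poly y = fract_poly t * M" by blast
    then obtain d m where dm: "d \<noteq> 0" "smult d y = t * m" "fract_poly m = smult (to_fract d) M"
      by (rule fract_poly_factor_lift)
    have t0: "fract_poly t \<noteq> 0" using t \<kappa> prime_elem_not_zeroI[OF P] by simp
    have M0: "M \<noteq> 0" using M less.prems by auto
    have "multiplicity P ([:to_fract d:] * M) = multiplicity P M"
      using dm(1) by (intro multiplicity_times_unit_right) (simp add: is_unit_triv)
    then have "multiplicity P (fract_poly m) = multiplicity P M" using dm(3) by simp
    also have "\<dots> < multiplicity P (fract_poly y)"
      using M prime_elem_multiplicity_mult_distrib[OF P t0 M0]
        multiplicity_smult_prime_elem[OF P \<kappa>] t by simp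
    finally obtain e' n m' where h: "e' \<notin> fract_dvd_ideal P" "m' \<notin> fract_dvd_ideal P"
      "e' * m = t ^ n * m'"
      using less.hyps dm less.prems by fastforce
    have "(e' * [:d:]) * y = e' * smult d y" by (simp add: ac_simps)
    also have "\<dots> = e' * (t * m)" using dm(2) by simp
    also have "\<dots> = t ^ Suc n * m'" using h(3) by (simp add: ac_simps)
    finally have "(e' * [:d:]) * y = t ^ Suc n * m'" .
    moreover have "e' * [:d:] \<notin> fract_dvd_ideal P"
      using tc_prime_idealD(4)[OF q h(1) const_notin_fract_dvd_ideal[OF P dm(1)]] .
    ultimately show ?thesis using h(2) by blast
  qed
qed

lemma separating_uniformizer_fract_dvd_ideal:
  assumes fd: "factorial_domain TYPE('r::idom)" and P: "prime_elem (P::'r fract poly)"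
    and t: "\<kappa> \<noteq> 0" "fract_poly t = smult \<kappa> P" "\<And>p. prime_elem p \<Longrightarrow> \<not> [:p:] dvd t"
  shows "separating_uniformizer (fract_dvd_ideal P) t"
  unfolding separating_uniformizer_def
proof (intro conjI allI impI)
  show "t \<in> fract_dvd_ideal P" using t(2) unfolding fract_dvd_ideal_def by (simp add: dvd_smult)
  show "\<exists>e n m. e \<notin> fract_dvd_ideal P \<and> m \<notin> fract_dvd_ideal P \<and> e * y = t ^ n * m"
    if "y \<noteq> 0" for y
    using fract_dvd_ideal_power_factor[OF P t(1,2) that] .
  show "q' = fract_dvd_ideal P" if q': "min_nonzero_prime q'" "t \<in> q'" for q'
    using min_nonzero_prime_cases[OF fd q'(1)]
  proof cases
    case (1 p)
    then show ?thesis using q'(2) t(3) unfolding const_dvd_ideal_def by blast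
  next
    case (2 P')
    then have "P' dvd smult \<kappa> P" using q'(2) t(2) unfolding fract_dvd_ideal_def by simp
    then have "P' dvd P" using t(1) by (simp add: dvd_smult_iff)
    then show ?thesis using fract_dvd_ideal_assoc[OF 2(1) P] 2(2) by simp
  qed
qed

lemma fract_multiplicity_eq_exponent:
  assumes P: "prime_elem (P::'r::idom fract poly)" and t: "\<kappa> \<noteq> 0" "fract_poly t = smult \<kappa> P"
    and h: "e \<notin> fract_dvd_ideal P" "m \<notin> fract_dvd_ideal P" "e * y = t ^ n * m" and y: "y \<noteq> 0"
  shows "multiplicity P (fract_poly y) = n"
proof -
  have e0: "e \<noteq> 0" and m0: "m \<noteq> 0" using h(1,2) unfolding fract_dvd_ideal_def by auto
  have t0: "fract_poly t \<noteq> 0" using t prime_elem_not_zeroI[OF P] by simp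
  have me: "multiplicity P (fract_poly e) = 0" and mm: "multiplicity P (fract_poly m) = 0"
    using h(1,2) unfolding fract_dvd_ideal_def by (simp_all add: not_dvd_imp_multiplicity_0)
  have mt: "multiplicity P (fract_poly t) = 1" unfolding t(2)
    by (rule multiplicity_smult_prime_elem[OF P t(1)])
  have "fract_poly e * fract_poly y = fract_poly t ^ n * fract_poly m"
    using arg_cong[OF h(3), of fract_poly] by (simp add: fract_poly_power)
  then have "multiplicity P (fract_poly e * fract_poly y) =
      multiplicity P (fract_poly t ^ n * fract_poly m)"
    by simp
  then show ?thesis
    using prime_elem_multiplicity_mult_distrib[OF P] prime_elem_multiplicity_power_distrib[OF P t0]
      e0 y m0 t0 me mm mt by simp
qed

lemma min_nonzero_prime_separating_uniformizer:
  assumes fd: "factorial_domain TYPE('r::idom)" and q: "min_nonzero_prime (q::'r poly set)"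
  obtains t where "separating_uniformizer q t"
  using min_nonzero_prime_cases[OF fd q]
proof cases
  case (1 p)
  then show thesis using that separating_uniformizer_const_dvd_ideal[OF fd] by blast
next
  case (2 P)
  obtain t \<kappa> where "\<kappa> \<noteq> 0" "fract_poly t = smult \<kappa> P" "\<And>p. prime_elem p \<Longrightarrow> \<not> [:p:] dvd t"
    using fract_prime_primitive_multiple[OF fd 2(1)] by blast
  then show thesis using that separating_uniformizer_fract_dvd_ideal[OF fd 2(1)] 2(2) by blast
qed

lemma const_dvd_ideal_assoc:
  assumes "p dvd q" "q dvd (p::'r::idom)"
  shows "const_dvd_ideal p = const_dvd_ideal q"
proof -
  have "[:p:] dvd [:q:]" "[:q:] dvd [:p:]" using assms by simp_all
  then have "[:p:] dvd y \<longleftrightarrow> [:q:] dvd y" for y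
    using dvd_trans[of "[:p:]" "[:q:]" y] dvd_trans[of "[:q:]" "[:p:]" y] by blast
  then show ?thesis unfolding const_dvd_ideal_def by blast
qed

lemma const_dvd_ideal_factor:
  assumes p: "prime_elem (p::'r::idom)" "\<alpha> \<in> const_dvd_ideal p"
    and h: "u dvd 1" "\<forall>p\<in>set ps. prime_elem p" "lead_coeff \<alpha> = u * prod_list ps"
  shows "const_dvd_ideal p \<in> const_dvd_ideal ` set ps"
proof -
  have "p dvd lead_coeff \<alpha>" using p(2) unfolding const_dvd_ideal_def const_poly_dvd_iff by blast
  then have "p dvd u * prod_list ps" using h(3) by simp
  moreover have "\<not> p dvd u" using dvd_trans[of p u 1] h(1) prime_elem_not_unit[OF p(1)] by blast
  ultimately have "p dvd prod_list ps" using prime_elem_dvd_multD[OF p(1)] by blast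
  then obtain r where r: "r \<in> set ps" "p dvd r" using prime_elem_dvd_prod_list[OF p(1)] by blast
  have "prime_elem r" using h(2) r(1) by blast
  then have "r dvd p" by (rule prime_elem_dvd_prime_elem_sym[OF p(1) _ r(2)])
  then have "const_dvd_ideal p = const_dvd_ideal r" by (rule const_dvd_ideal_assoc[OF r(2)])
  then show ?thesis using r(1) by simp
qed

lemma finite_min_nonzero_primes_containing:
  assumes fd: "factorial_domain TYPE('r::idom)" and \<alpha>: "(\<alpha>::'r poly) \<noteq> 0"
  shows "finite {q. min_nonzero_prime q \<and> \<alpha> \<in> q}"
proof -
  have "lead_coeff \<alpha> \<noteq> 0" using \<alpha> by simp
  then obtain u ps where h: "u dvd 1" "\<forall>p\<in>set ps. prime_elem p" "lead_coeff \<alpha> = u * prod_list ps"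
    by (rule unit_prime_factorization[OF fd])
  have const: "const_dvd_ideal p \<in> const_dvd_ideal ` set ps"
    if "prime_elem p" "\<alpha> \<in> const_dvd_ideal p" for p
    using const_dvd_ideal_factor[OF that h] .
  have fract: "fract_dvd_ideal P \<in> fract_dvd_ideal ` prime_factors (fract_poly \<alpha>)"
    if P: "prime_elem P" "\<alpha> \<in> fract_dvd_ideal P" for P
  proof -
    have "normalize P \<in> prime_factors (fract_poly \<alpha>)"
      using \<alpha> P unfolding fract_dvd_ideal_def by (simp add: in_prime_factors_iff)
    moreover have "fract_dvd_ideal P = fract_dvd_ideal (normalize P)"
      by (rule fract_dvd_ideal_assoc[OF P(1)]) (use P(1) in simp_all)
    ultimately show ?thesis by simp
  qed
  have "{q. min_nonzero_prime q \<and> \<alpha> \<in> q} \<subseteq>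
      const_dvd_ideal ` set ps \<union> fract_dvd_ideal ` prime_factors (fract_poly \<alpha>)"
  proof
    fix q assume "q \<in> {q. min_nonzero_prime q \<and> \<alpha> \<in> q}"
    then have q: "min_nonzero_prime q" "\<alpha> \<in> q" by auto
    from min_nonzero_prime_cases[OF fd q(1)]
    show "q \<in> const_dvd_ideal ` set ps \<union> fract_dvd_ideal ` prime_factors (fract_poly \<alpha>)"
    proof cases
      case (1 p)
      then show ?thesis using const[of p] q(2) by simp
    next
      case (2 P)
      then show ?thesis using fract[of P] q(2) by simp
    qed
  qed
  then show ?thesis by (rule finite_subset) simp
qed

lemma fract_poly_associated_smult:
  fixes A B :: "'r::idom poly"
  assumes "fract_poly A \<noteq> 0" "normalize (fract_poly A) = normalize (fract_poly B)"
  obtains r1 r2 where "r1 \<noteq> 0" "r2 \<noteq> 0" "smult r2 A = smult r1 B"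
proof -
  obtain c where c: "is_unit c" "fract_poly A = c * fract_poly B"
    by (rule associatedE1[OF assms(2)])
  then obtain \<gamma> where \<gamma>: "c = [:\<gamma>:]" "is_unit \<gamma>" using is_unit_poly_iff by blast
  obtain r1 r2 where r: "\<gamma> = Fract r1 r2" "r2 \<noteq> 0" by (cases \<gamma>) blast
  have r1: "r1 \<noteq> 0" using r \<gamma>(2) by (auto simp: Fract_conv_to_fract)
  have "fract_poly A = smult (to_fract r1 / to_fract r2) (fract_poly B)"
    using c(2) \<gamma>(1) r by (simp add: Fract_conv_to_fract)
  then have "fract_poly (smult r2 A) = fract_poly (smult r1 B)" using r(2) by simp
  then show thesis using that r1 r(2) by (simp only: fract_poly_eq_iff)
qed

lemma multiplicity_prime_dvd_prime_elem:
  fixes P X :: "'a::factorial_ring_gcd"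
  assumes "prime_elem X" "prime_elem P" "P dvd X"
  shows "multiplicity P Z = multiplicity X Z"
proof -
  obtain c where "c dvd 1" "X = P * c" by (rule prime_elem_dvd_prime_elem[OF assms(2,1,3)])
  then show ?thesis using multiplicity_times_unit_left[of c P Z] by (simp add: mult.commute)
qed

lemma fract_poly_assoc_up_to_X:
  fixes \<alpha> \<beta> :: "'r::idom poly"
  assumes \<alpha>: "\<alpha> \<noteq> 0" and \<beta>: "\<beta> \<noteq> 0"
    and mult: "\<And>P. prime_elem P \<Longrightarrow> \<not> P dvd [:0, 1:] \<Longrightarrow>
      multiplicity P (fract_poly \<alpha>) = multiplicity P (fract_poly \<beta>)"
  obtains r1 r2 k1 k2 where "r1 \<noteq> 0" "r2 \<noteq> 0"
    "smult r2 (\<alpha> * [:0, 1:] ^ k2) = smult r1 (\<beta> * [:0, 1:] ^ k1)"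
proof -
  define X :: "'r fract poly" where "X = [:0, 1:]"
  have X: "prime_elem X" "fract_poly [:0, 1:] = X"
    unfolding X_def by (simp_all add: prime_elem_linear_field_poly map_poly_pCons)
  define k1 where "k1 = multiplicity X (fract_poly \<alpha>)"
  define k2 where "k2 = multiplicity X (fract_poly \<beta>)"
  define A where "A = \<alpha> * [:0, 1:] ^ k2"
  define B where "B = \<beta> * [:0, 1:] ^ k1"
  have fA: "fract_poly A = fract_poly \<alpha> * X ^ k2" and fB: "fract_poly B = fract_poly \<beta> * X ^ k1"
    unfolding A_def B_def X(2)[symmetric] by (simp_all add: fract_poly_power)
  have X0: "X \<noteq> 0" using X(1) by auto
  have A0: "fract_poly A \<noteq> 0" and B0: "fract_poly B \<noteq> 0" using fA fB \<alpha> \<beta> X0 by simp_all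
  have "multiplicity P (fract_poly A) = multiplicity P (fract_poly B)" if P: "prime P" for P
  proof (cases "P dvd X")
    case False
    then have "\<not> P dvd [:0, 1:]" "multiplicity P X = 0"
      unfolding X_def by (simp_all add: not_dvd_imp_multiplicity_0)
    then show ?thesis
      using mult[of P] P X0 \<alpha> \<beta> unfolding fA fB
      by (simp add: prime_elem_multiplicity_mult_distrib prime_elem_multiplicity_power_distrib)
  next
    case True
    then have "multiplicity P Z = multiplicity X Z" for Z
      using multiplicity_prime_dvd_prime_elem[OF X(1) _ True] P by blast
    moreover have "multiplicity X X = 1"
      using multiplicity_self[OF X0 prime_elem_not_unit[OF X(1)]] .
    ultimately show ?thesis
      using X(1) X0 \<alpha> \<beta> unfolding fA fB k1_def k2_def
      by (simp add: prime_elem_multiplicity_mult_distrib prime_elem_multiplicity_power_distrib)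
  qed
  then have "normalize (fract_poly A) = normalize (fract_poly B)"
    by (rule multiplicity_eq_imp_eq[OF A0 B0])
  then obtain r1 r2 where "r1 \<noteq> 0" "r2 \<noteq> 0" "smult r2 A = smult r1 B"
    by (rule fract_poly_associated_smult[OF A0])
  then show thesis using that unfolding A_def B_def by blast
qed



section \<open>Charts\<close>

lemma chart_cover_closed:
  fixes \<psi> :: "'a::comm_ring_1 \<Rightarrow> 'b::comm_ring_1" and X :: 'a
  assumes I: "tc_ideal I" and \<psi>: "\<psi> 1 = 1" "\<And>x y. \<psi> (x + y) = \<psi> x + \<psi> y"
    "\<And>x y. \<psi> (x * y) = \<psi> x * \<psi> y"
  defines "S \<equiv> {z. \<exists>N a. \<psi> X ^ N * z - \<psi> a \<in> I}"
  shows "\<psi> a \<in> S" "z1 \<in> S \<Longrightarrow> z2 \<in> S \<Longrightarrow> z1 + z2 \<in> S" "z1 \<in> S \<Longrightarrow> z2 \<in> S \<Longrightarrow> z1 * z2 \<in> S"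
proof -
  have pow: "\<psi> (x ^ n) = \<psi> x ^ n" for x n by (induction n) (simp_all add: \<psi>(1,3))
  show "\<psi> a \<in> S" unfolding S_def using ideal_diff_refl[OF I, of "\<psi> a"]
    by (intro CollectI exI[of _ 0] exI[of _ a]) simp
  assume "z1 \<in> S" "z2 \<in> S"
  then obtain N a1 M a2 where h: "\<psi> X ^ N * z1 - \<psi> a1 \<in> I" "\<psi> X ^ M * z2 - \<psi> a2 \<in> I"
    unfolding S_def by blast
  have "(\<psi> X ^ M * (\<psi> X ^ N * z1) + \<psi> X ^ N * (\<psi> X ^ M * z2)) -
      (\<psi> X ^ M * \<psi> a1 + \<psi> X ^ N * \<psi> a2) \<in> I"
    using ideal_diff_add[OF I ideal_diff_mult_left[OF I h(1)] ideal_diff_mult_left[OF I h(2)]] .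
  moreover have "\<psi> X ^ M * (\<psi> X ^ N * z1) + \<psi> X ^ N * (\<psi> X ^ M * z2) = \<psi> X ^ (N + M) * (z1 + z2)"
    by (simp add: algebra_simps power_add)
  moreover have "\<psi> X ^ M * \<psi> a1 + \<psi> X ^ N * \<psi> a2 = \<psi> (X ^ M * a1 + X ^ N * a2)"
    by (simp add: \<psi>(2,3) pow)
  ultimately show "z1 + z2 \<in> S" unfolding S_def by auto
  have "(\<psi> X ^ N * z1) * (\<psi> X ^ M * z2) - \<psi> a1 * \<psi> a2 \<in> I" using ideal_diff_mult[OF I h] .
  moreover have "(\<psi> X ^ N * z1) * (\<psi> X ^ M * z2) = \<psi> X ^ (N + M) * (z1 * z2)"
    by (simp add: algebra_simps power_add)
  ultimately show "z1 * z2 \<in> S" unfolding S_def by (auto simp: \<psi>(3) intro!: exI[of _ "a1 * a2"])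
qed

text \<open>The locale identifies B/I with w = psi X inverted and A with X inverted, without
  constructing either ring: psi : A \<rightarrow> B is a ring map that is injective modulo I, and every
  element of B times a power of w is congruent modulo I to an image of psi. Height-one primes
  of B/I not containing w then correspond, by extension and contraction, to height-one primes of
  A not containing X.\<close>

locale chart =
  fixes \<psi> :: "'a::comm_ring_1 \<Rightarrow> 'b::comm_ring_1" and I :: "'b set" and X :: 'a
  assumes psi_1: "\<psi> 1 = 1" and psi_add: "\<And>a b. \<psi> (a + b) = \<psi> a + \<psi> b"
    and psi_mult: "\<And>a b. \<psi> (a * b) = \<psi> a * \<psi> b"
    and I_prime: "tc_prime_ideal I"
    and psi_inj: "\<And>a. \<psi> a \<in> I \<Longrightarrow> a = 0"
    and cover: "\<And>z. \<exists>N a. \<psi> X ^ N * z - \<psi> a \<in> I"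
    and X_nonzero: "X \<noteq> 0"
begin

abbreviation w :: 'b where "w \<equiv> \<psi> X"

lemma I_ideal: "tc_ideal I"
  using tc_prime_idealD(1)[OF I_prime] .

lemma psi_0: "\<psi> 0 = 0"
  using psi_add[of 0 0] by simp

lemma psi_diff: "\<psi> (x - y) = \<psi> x - \<psi> y"
  using psi_add[of "x - y" y] by (simp add: algebra_simps)

lemma psi_power: "\<psi> (x ^ n) = \<psi> x ^ n"
  by (induction n) (simp_all add: psi_1 psi_mult)

lemma psi_eq_mod: "\<psi> y - \<psi> z \<in> I \<Longrightarrow> y = z"
  using psi_inj[of "y - z"] psi_diff by simp

lemma w_power_notin: "w ^ N \<notin> I"
proof -
  have "w \<notin> I" using psi_inj[of X] X_nonzero by blast
  then show ?thesis by (rule prime_ideal_power_notin[OF I_prime])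
qed

lemma cover_nonzero:
  assumes "x \<notin> I" "w ^ N * x - \<psi> y \<in> I"
  shows "y \<noteq> 0"
proof
  assume "y = 0"
  then have "w ^ N * x \<in> I" using assms(2) by (simp add: psi_0)
  then show False using tc_prime_idealD(4)[OF I_prime w_power_notin assms(1)] by blast
qed

definition extend :: "'a set \<Rightarrow> 'b set" where
  "extend q = {x. \<exists>N y. y \<in> q \<and> w ^ N * x - \<psi> y \<in> I}"

definition contract :: "'b set \<Rightarrow> 'a set" where
  "contract Q = {y. \<psi> y \<in> Q}"

lemma I_subset_extend: "tc_ideal q \<Longrightarrow> I \<subseteq> extend q"
  unfolding extend_def using tc_idealD(1) psi_0
  by (auto intro!: exI[of _ 0] exI[of _ 0])

lemma psi_in_extend_iff:
  assumes q: "tc_prime_ideal q" "X \<notin> q"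
  shows "\<psi> y \<in> extend q \<longleftrightarrow> y \<in> q"
proof
  assume "y \<in> q"
  moreover have "w ^ 0 * \<psi> y - \<psi> y \<in> I" using ideal_diff_refl[OF I_ideal] by simp
  ultimately show "\<psi> y \<in> extend q" unfolding extend_def by blast
next
  assume "\<psi> y \<in> extend q"
  then obtain N g where g: "g \<in> q" "w ^ N * \<psi> y - \<psi> g \<in> I" unfolding extend_def by blast
  then have "X ^ N * y = g" by (intro psi_eq_mod) (simp add: psi_mult psi_power)
  moreover have "X ^ N \<notin> q" using prime_ideal_power_notin[OF q] .
  ultimately show "y \<in> q" using tc_prime_idealD(2)[OF q(1)] g(1) by blast
qed

lemma extend_ideal:
  assumes q: "tc_ideal q"
  shows "tc_ideal (extend q)"
  unfolding tc_ideal_def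
proof (intro conjI ballI allI)
  show "0 \<in> extend q" using I_subset_extend[OF q] tc_idealD(1)[OF I_ideal] by blast
next
  fix x x' assume "x \<in> extend q" "x' \<in> extend q"
  then obtain N y M y' where h: "y \<in> q" "w ^ N * x - \<psi> y \<in> I" "y' \<in> q" "w ^ M * x' - \<psi> y' \<in> I"
    unfolding extend_def by blast
  have "(w ^ M * (w ^ N * x) + w ^ N * (w ^ M * x')) - (w ^ M * \<psi> y + w ^ N * \<psi> y') \<in> I"
    using ideal_diff_add[OF I_ideal ideal_diff_mult_left[OF I_ideal h(2)]
        ideal_diff_mult_left[OF I_ideal h(4)]] .
  moreover have "w ^ M * (w ^ N * x) + w ^ N * (w ^ M * x') = w ^ (N + M) * (x + x')"
    by (simp add: algebra_simps power_add)
  moreover have "w ^ M * \<psi> y + w ^ N * \<psi> y' = \<psi> (X ^ M * y + X ^ N * y')"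
    by (simp add: psi_add psi_mult psi_power)
  moreover have "X ^ M * y + X ^ N * y' \<in> q"
    using tc_idealD(2)[OF q tc_idealD(3)[OF q h(1)] tc_idealD(3)[OF q h(3)]] .
  ultimately show "x + x' \<in> extend q" unfolding extend_def by auto
next
  fix x r assume "x \<in> extend q"
  then obtain N y where h: "y \<in> q" "w ^ N * x - \<psi> y \<in> I" unfolding extend_def by blast
  obtain K z where z: "w ^ K * r - \<psi> z \<in> I" using cover by blast
  have "(w ^ K * r) * (w ^ N * x) - \<psi> z * \<psi> y \<in> I" using ideal_diff_mult[OF I_ideal z h(2)] .
  moreover have "(w ^ K * r) * (w ^ N * x) = w ^ (K + N) * (r * x)"
    by (simp add: algebra_simps power_add)
  moreover have "\<psi> z * \<psi> y = \<psi> (z * y)" by (simp add: psi_mult)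
  moreover have "z * y \<in> q" using tc_idealD(3)[OF q h(1)] .
  ultimately show "r * x \<in> extend q" unfolding extend_def by auto
qed

text \<open>Up to powers of w, x and x' are images psi y and psi y'; then y y' lies in q because
  q is prime and does not contain X.\<close>

lemma extend_prime:
  assumes q: "tc_prime_ideal q" "X \<notin> q"
  shows "tc_prime_ideal (extend q)"
proof -
  have "1 \<notin> extend q"
    using psi_in_extend_iff[OF q, of 1] tc_prime_idealD(3)[OF q(1)] psi_1 by simp
  moreover have "x \<in> extend q \<or> x' \<in> extend q" if xx: "x * x' \<in> extend q" for x x'
  proof -
    obtain K g where g: "g \<in> q" "w ^ K * (x * x') - \<psi> g \<in> I" using xx unfolding extend_def by blast
    obtain N y where y: "w ^ N * x - \<psi> y \<in> I" using cover by blast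
    obtain M y' where y': "w ^ M * x' - \<psi> y' \<in> I" using cover by blast
    have "w ^ K * ((w ^ N * x) * (w ^ M * x')) - w ^ K * (\<psi> y * \<psi> y') \<in> I"
      using ideal_diff_mult_left[OF I_ideal ideal_diff_mult[OF I_ideal y y']] .
    moreover have "w ^ K * ((w ^ N * x) * (w ^ M * x')) - w ^ (N + M) * \<psi> g \<in> I"
      using ideal_diff_mult_left[OF I_ideal g(2), of "w ^ (N + M)"]
        by (simp add: algebra_simps power_add)
    ultimately have "w ^ K * (\<psi> y * \<psi> y') - w ^ (N + M) * \<psi> g \<in> I"
      using ideal_diff_trans[OF I_ideal ideal_diff_sym[OF I_ideal]] by blast
    then have "X ^ K * (y * y') = X ^ (N + M) * g"
      by (intro psi_eq_mod) (simp add: psi_mult psi_power)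
    moreover have "X ^ (N + M) * g \<in> q" using tc_idealD(3)[OF tc_prime_idealD(1)[OF q(1)] g(1)] .
    moreover have "X ^ K \<notin> q" using prime_ideal_power_notin[OF q] .
    ultimately have "y \<in> q \<or> y' \<in> q" using tc_prime_idealD(2)[OF q(1)] by metis
    then show ?thesis using y y' unfolding extend_def by blast
  qed
  ultimately show ?thesis
    unfolding tc_prime_ideal_def using extend_ideal[OF tc_prime_idealD(1)[OF q(1)]] by blast
qed

lemma w_power_notin_extend:
  assumes q: "tc_prime_ideal q" "X \<notin> q"
  shows "w ^ N \<notin> extend q"
  using prime_ideal_power_notin[OF extend_prime[OF q]] psi_in_extend_iff[OF q] q(2) by blast

lemma contract_prime:
  assumes Q: "tc_prime_ideal Q" "w \<notin> Q"
  shows "tc_prime_ideal (contract Q)" "X \<notin> contract Q"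
proof -
  have iQ: "tc_ideal Q" using tc_prime_idealD(1)[OF Q(1)] .
  have "tc_ideal (contract Q)" unfolding tc_ideal_def contract_def
    using tc_idealD(1,2,3)[OF iQ] by (simp add: psi_0 psi_add psi_mult)
  moreover have "1 \<notin> contract Q" using tc_prime_idealD(3)[OF Q(1)] by (simp add: contract_def psi_1)
  moreover have "x \<in> contract Q \<or> y \<in> contract Q" if "x * y \<in> contract Q" for x y
    using that tc_prime_idealD(2)[OF Q(1)] by (simp add: contract_def psi_mult)
  ultimately show "tc_prime_ideal (contract Q)" unfolding tc_prime_ideal_def by blast
  show "X \<notin> contract Q" using Q(2) by (simp add: contract_def)
qed

lemma contract_extend:
  assumes "tc_prime_ideal q" "X \<notin> q"
  shows "contract (extend q) = q"
  using psi_in_extend_iff[OF assms] unfolding contract_def by blast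

lemma extend_contract:
  assumes Q: "tc_prime_ideal Q" "w \<notin> Q" "I \<subseteq> Q"
  shows "extend (contract Q) = Q"
proof
  have iQ: "tc_ideal Q" using tc_prime_idealD(1)[OF Q(1)] .
  show "extend (contract Q) \<subseteq> Q"
  proof
    fix x assume "x \<in> extend (contract Q)"
    then obtain N y where h: "\<psi> y \<in> Q" "w ^ N * x - \<psi> y \<in> I" unfolding extend_def contract_def
      by blast
    then have "w ^ N * x \<in> Q" using ideal_diff_mem[OF iQ Q(3)] by blast
    moreover have "w ^ N \<notin> Q" using prime_ideal_power_notin[OF Q(1,2)] .
    ultimately show "x \<in> Q" using tc_prime_idealD(2)[OF Q(1)] by blast
  qed
  show "Q \<subseteq> extend (contract Q)"
  proof
    fix x assume x: "x \<in> Q"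
    obtain N y where h: "w ^ N * x - \<psi> y \<in> I" using cover by blast
    have "w ^ N * x \<in> Q" using tc_idealD(3)[OF iQ x] .
    then have "\<psi> y \<in> Q" using ideal_diff_mem[OF iQ Q(3) ideal_diff_sym[OF I_ideal h]] by blast
    then show "x \<in> extend (contract Q)" using h unfolding extend_def contract_def by blast
  qed
qed

lemma contract_nonzero:
  assumes Q: "tc_prime_ideal Q" "w \<notin> Q" "I \<subset> Q"
  obtains y where "y \<in> contract Q" "y \<noteq> 0"
proof -
  obtain x where x: "x \<in> Q" "x \<notin> I" using Q(3) by blast
  obtain N y where h: "w ^ N * x - \<psi> y \<in> I" using cover by blast
  have iQ: "tc_ideal Q" using tc_prime_idealD(1)[OF Q(1)] .
  have "w ^ N * x \<in> Q" using tc_idealD(3)[OF iQ x(1)] .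
  then have "\<psi> y \<in> Q" using ideal_diff_mem[OF iQ _ ideal_diff_sym[OF I_ideal h]] Q(3) by blast
  then show thesis using that cover_nonzero[OF x(2) h] unfolding contract_def by blast
qed

lemma extend_height_one:
  assumes q: "min_nonzero_prime q" "X \<notin> q"
  shows "extend q \<in> height_one_primes_mod I"
proof -
  have qp: "tc_prime_ideal q" using min_nonzero_primeD(1)[OF q(1)] .
  obtain y where y: "y \<in> q" "y \<noteq> 0" using min_nonzero_primeD(2)[OF q(1)] by blast
  have "\<psi> y \<in> extend q" "\<psi> y \<notin> I" using psi_in_extend_iff[OF qp q(2)] y psi_inj by auto
  then have sub: "I \<subset> extend q" using I_subset_extend[OF tc_prime_idealD(1)[OF qp]] by blast
  have "\<not> (\<exists>Q'. tc_prime_ideal Q' \<and> I \<subset> Q' \<and> Q' \<subset> extend q)"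
  proof
    assume "\<exists>Q'. tc_prime_ideal Q' \<and> I \<subset> Q' \<and> Q' \<subset> extend q"
    then obtain Q' where Q': "tc_prime_ideal Q'" "I \<subset> Q'" "Q' \<subset> extend q" by blast
    have wQ: "w \<notin> Q'" using Q'(3) w_power_notin_extend[OF qp q(2), of 1] by auto
    obtain y' where "y' \<in> contract Q'" "y' \<noteq> 0" by (rule contract_nonzero[OF Q'(1) wQ Q'(2)])
    moreover have "contract Q' \<subseteq> q"
      using Q'(3) contract_extend[OF qp q(2)] unfolding contract_def by blast
    ultimately have "contract Q' = q"
      using min_nonzero_primeD(3)[OF q(1) contract_prime(1)[OF Q'(1) wQ]] by blast
    then have "Q' = extend q" using extend_contract[OF Q'(1) wQ] Q'(2) by blast
    then show False using Q'(3) by blast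
  qed
  then show ?thesis unfolding height_one_primes_mod_def using extend_prime[OF qp q(2)] sub by blast
qed

lemma contract_height_one:
  assumes Q: "Q \<in> height_one_primes_mod I" "w \<notin> Q"
  shows "min_nonzero_prime (contract Q)" "extend (contract Q) = Q" "X \<notin> contract Q"
proof -
  have Qp: "tc_prime_ideal Q" "I \<subset> Q"
    and no: "\<not> (\<exists>Q'. tc_prime_ideal Q' \<and> I \<subset> Q' \<and> Q' \<subset> Q)"
    using Q(1) unfolding height_one_primes_mod_def by blast+
  show eq: "extend (contract Q) = Q" using extend_contract[OF Qp(1) Q(2)] Qp(2) by blast
  show X: "X \<notin> contract Q" using contract_prime(2)[OF Qp(1) Q(2)] .
  have "q' = contract Q" if q': "tc_prime_ideal q'" "y \<in> q'" "y \<noteq> 0" "q' \<subseteq> contract Q" for q' y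
  proof -
    have X': "X \<notin> q'" using X q'(4) by blast
    have "\<psi> y \<in> extend q'" "\<psi> y \<notin> I" using psi_in_extend_iff[OF q'(1) X'] q'(2,3) psi_inj by auto
    then have "I \<subset> extend q'" using I_subset_extend[OF tc_prime_idealD(1)[OF q'(1)]] by blast
    moreover have "extend q' \<subseteq> Q"
      using q'(4) eq unfolding extend_def contract_def by blast
    ultimately have "extend q' = Q" using no extend_prime[OF q'(1) X'] by blast
    then show ?thesis using contract_extend[OF q'(1) X'] by blast
  qed
  moreover obtain y where "y \<in> contract Q" "y \<noteq> 0" by (rule contract_nonzero[OF Qp(1) Q(2) Qp(2)])
  ultimately show "min_nonzero_prime (contract Q)"
    unfolding min_nonzero_prime_def using contract_prime(1)[OF Qp(1) Q(2)] by blast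
qed

lemma uniformizer_at_extend:
  assumes q: "min_nonzero_prime q" "X \<notin> q" and t: "separating_uniformizer q t"
  shows "uniformizer_at I (extend q) (\<psi> t)"
proof -
  have qp: "tc_prime_ideal q" using min_nonzero_primeD(1)[OF q(1)] .
  have P: "tc_prime_ideal (extend q)" using extend_prime[OF qp q(2)] .
  have sub: "I \<subset> extend q" using extend_height_one[OF q] unfolding height_one_primes_mod_def
    by blast
  have tq: "t \<in> q" and loc: "\<And>y. y \<noteq> 0 \<Longrightarrow> \<exists>e n m. e \<notin> q \<and> m \<notin> q \<and> e * y = t ^ n * m"
    using t unfolding separating_uniformizer_def by blast+
  have "\<exists>n. assoc_power_at I (extend q) (\<psi> t) x n" if x: "x \<notin> I" for x
  proof -
    obtain N y where h: "w ^ N * x - \<psi> y \<in> I" using cover by blast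
    obtain e n m where em: "e \<notin> q" "m \<notin> q" "e * y = t ^ n * m"
      using loc[OF cover_nonzero[OF x h]] by blast
    have "\<psi> e * (w ^ N * x) - \<psi> e * \<psi> y \<in> I" using ideal_diff_mult_left[OF I_ideal h] .
    moreover have "\<psi> e * \<psi> y = \<psi> m * \<psi> t ^ n"
      using arg_cong[OF em(3), of \<psi>] by (simp add: psi_mult psi_power ac_simps)
    ultimately have "(\<psi> e * w ^ N) * x - \<psi> m * \<psi> t ^ n \<in> I" by (simp add: ac_simps)
    moreover have "\<psi> e * w ^ N \<notin> extend q"
      using tc_prime_idealD(4)[OF P] psi_in_extend_iff[OF qp q(2)] em(1)
        w_power_notin_extend[OF qp q(2)]
      by blast
    moreover have "\<psi> m \<notin> extend q" using psi_in_extend_iff[OF qp q(2)] em(2) by blast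
    ultimately show ?thesis unfolding assoc_power_at_def by blast
  qed
  moreover have "\<psi> t \<in> extend q" using psi_in_extend_iff[OF qp q(2)] tq by blast
  ultimately show ?thesis unfolding uniformizer_at_def using P I_prime sub by blast
qed

lemma height_one_eq_extend:
  assumes q: "min_nonzero_prime q" "X \<notin> q" and t: "separating_uniformizer q t"
    and Q: "Q \<in> height_one_primes_mod I" "w \<notin> Q" "\<psi> t \<in> Q"
  shows "Q = extend q"
proof -
  have "t \<in> contract Q" using Q(3) unfolding contract_def by blast
  then have "contract Q = q"
    using t contract_height_one(1)[OF Q(1,2)] unfolding separating_uniformizer_def by blast
  then show ?thesis using contract_height_one(2)[OF Q(1,2)] by simp
qed

end



section \<open>The ring R[u,v] and the ideal (uv - f)\<close>

definition const_uv :: "'r::comm_ring_1 \<Rightarrow> 'r poly poly" where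
  "const_uv r = [:[:r:]:]"

definition embed_u :: "'r::comm_ring_1 poly \<Rightarrow> 'r poly poly" where
  "embed_u y = [:y:]"

definition embed_v :: "'r::comm_ring_1 poly \<Rightarrow> 'r poly poly" where
  "embed_v y = map_poly (\<lambda>r. [:r:]) y"

definition var_u :: "'r::comm_ring_1 poly poly" where
  "var_u = [:[:0, 1:]:]"

definition var_v :: "'r::comm_ring_1 poly poly" where
  "var_v = [:0, 1:]"

definition u_to_0 :: "'r::comm_ring_1 poly poly \<Rightarrow> 'r poly" where
  "u_to_0 x = map_poly (\<lambda>c. coeff c 0) x"

lemma coeff_embed_v: "coeff (embed_v y) n = [:coeff y n:]"
  unfolding embed_v_def by (simp add: coeff_map_poly)

lemma embed_v_add: "embed_v (x + y) = embed_v x + embed_v y"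
  by (intro poly_eqI) (simp add: coeff_embed_v)

lemma embed_v_mult: "embed_v (x * y) = embed_v x * embed_v y"
proof (rule poly_eqI)
  have const_sum: "[:sum g A:] = (\<Sum>x\<in>A. [:g x:])" for g :: "nat \<Rightarrow> 'a" and A
  proof (induction A rule: infinite_finite_induct)
    case (insert x F)
    show ?case by (simp add: insert.hyps flip: insert.IH)
  qed simp_all
  show "coeff (embed_v (x * y)) n = coeff (embed_v x * embed_v y) n" for n
    by (simp add: coeff_embed_v coeff_mult const_sum ac_simps)
qed

lemma embed_v_1: "embed_v 1 = 1"
  unfolding embed_v_def by simp

lemma embed_u_add: "embed_u (x + y) = embed_u x + embed_u y"
  unfolding embed_u_def by simp

lemma embed_u_mult: "embed_u (x * y) = embed_u x * embed_u y"
  unfolding embed_u_def by simp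

lemma embed_u_1: "embed_u 1 = 1"
  unfolding embed_u_def by simp

lemma embed_u_power: "embed_u (y ^ n) = embed_u y ^ n"
  by (induction n) (simp_all add: embed_u_1 embed_u_mult)

lemma embed_u_X: "embed_u [:0, 1:] = var_u"
  unfolding embed_u_def var_u_def ..

lemma embed_v_X: "embed_v [:0, 1:] = var_v"
  unfolding embed_v_def var_v_def by (simp add: map_poly_pCons)

lemma embed_u_const: "embed_u [:r:] = const_uv r"
  unfolding embed_u_def const_uv_def ..

lemma embed_v_const: "embed_v [:r:] = const_uv r"
  unfolding embed_v_def const_uv_def by (simp add: map_poly_pCons)

lemma embed_u_smult: "embed_u (smult r y) = const_uv r * embed_u y"
  unfolding embed_u_def const_uv_def by simp

lemma const_uv_mult: "const_uv (a * b) = const_uv a * const_uv b"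
  unfolding const_uv_def by simp

lemma const_uv_1: "const_uv 1 = 1"
  unfolding const_uv_def by (simp only: one_pCons[symmetric])

lemma const_uv_power: "const_uv (a ^ n) = const_uv a ^ n"
  by (induction n) (simp_all add: const_uv_mult const_uv_1)

lemma const_uv_prod: "const_uv (prod g A) = (\<Prod>x\<in>A. const_uv (g x))"
  by (induction A rule: infinite_finite_induct) (simp_all add: const_uv_mult const_uv_1)

lemma uv_minus_eq: "uv_minus f = var_u * var_v - const_uv f"
  unfolding uv_minus_def var_u_def var_v_def const_uv_def by simp

lemma X_ideal_eq: "X_ideal f = {uv_minus f * h | h. True}"
  unfolding X_ideal_def by (rule ideal_gen_singleton)

lemma X_ideal_ideal: "tc_ideal (X_ideal f)"
  unfolding X_ideal_def by (rule ideal_gen_ideal)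

lemma var_u_var_v_cong: "var_u * var_v - const_uv f \<in> X_ideal f"
  unfolding X_ideal_eq uv_minus_eq by (auto intro: exI[of _ 1])

lemma var_v_var_u_cong: "var_v * var_u - const_uv f \<in> X_ideal f"
  using var_u_var_v_cong by (simp add: mult.commute)

text \<open>Since f \<noteq> 0, the variable u is a nonzerodivisor modulo uv - f: comparing coefficients of
  u z = (uv - f) h at u = 0 shows that u divides h.\<close>

lemma var_u_cancel:
  fixes f :: "'r::idom"
  assumes f: "f \<noteq> 0" and z: "var_u * z \<in> X_ideal f"
  shows "z \<in> X_ideal f"
proof -
  obtain h where h: "var_u * z = uv_minus f * h" using z unfolding X_ideal_eq by blast
  have "[:0, 1:] dvd coeff h k" for k
  proof -
    have "[:0, 1:] * coeff z k =
        [:-f:] * coeff h k + [:0, 1:] * (if k = 0 then 0 else coeff h (k - 1))"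
      using arg_cong[OF h, of "\<lambda>x. coeff x k"] unfolding var_u_def uv_minus_def
        by (cases k) simp_all
    then have "poly ([:0, 1:] * coeff z k) 0 =
        poly ([:-f:] * coeff h k + [:0, 1:] * (if k = 0 then 0 else coeff h (k - 1))) 0"
      by (rule arg_cong)
    then have "f * poly (coeff h k) 0 = 0" by simp
    then have "poly (coeff h k) 0 = 0" using f by simp
    then show ?thesis using poly_eq_0_iff_dvd[of "coeff h k" 0] by simp
  qed
  then have "var_u dvd h" unfolding var_u_def by (simp add: const_poly_dvd_iff)
  then obtain h' where h': "h = var_u * h'" by (rule dvdE)
  have "var_u * z = var_u * (uv_minus f * h')" using h h' by (simp add: ac_simps)
  moreover have "var_u \<noteq> (0 :: 'r poly poly)" unfolding var_u_def by simp
  ultimately have "z = uv_minus f * h'" by simp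
  then show ?thesis unfolding X_ideal_eq by blast
qed

lemma coeff_uv_minus_mult_top:
  "coeff (uv_minus f * h) (Suc (degree h)) = [:0, 1:] * coeff h (degree h)"
  unfolding uv_minus_def by (simp add: coeff_eq_0)

lemma embed_u_in_X_ideal:
  fixes f :: "'r::idom"
  assumes "embed_u y \<in> X_ideal f"
  shows "y = 0"
proof -
  obtain h where h: "[:y:] = uv_minus f * h" using assms unfolding X_ideal_eq embed_u_def by blast
  show ?thesis
  proof (cases "h = 0")
    case False
    have "coeff [:y:] (Suc (degree h)) = [:0, 1:] * coeff h (degree h)"
      unfolding h by (rule coeff_uv_minus_mult_top)
    then show ?thesis using False by simp
  qed (use h in simp)
qed

lemma embed_v_in_X_ideal:
  fixes f :: "'r::idom"
  assumes "embed_v y \<in> X_ideal f"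
  shows "y = 0"
proof -
  obtain h where h: "embed_v y = uv_minus f * h" using assms unfolding X_ideal_eq by blast
  show ?thesis
  proof (cases "h = 0")
    case True
    then show ?thesis using h unfolding embed_v_def by (simp add: map_poly_eq_0_iff)
  next
    case False
    have "[:coeff y (Suc (degree h)):] = [:0, 1:] * coeff h (degree h)"
      using coeff_uv_minus_mult_top[of f h] unfolding h[symmetric] coeff_embed_v .
    then have "degree ([:0, 1:] * coeff h (degree h)) = 0" by (metis degree_pCons_0)
    moreover have "degree ([:0, 1:] * coeff h (degree h)) = Suc (degree (coeff h (degree h)))"
      using False by (subst degree_mult_eq) simp_all
    ultimately show ?thesis by simp
  qed
qed

lemma embed_u_cover:
  fixes f :: "'r::idom"
  shows "\<exists>N a. embed_u [:0, 1:] ^ N * z - embed_u a \<in> X_ideal f"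
proof -
  define S where "S = {z. \<exists>N a. embed_u [:0, 1:] ^ N * z - embed_u a \<in> X_ideal f}"
  note closed = chart_cover_closed[where X = "[:0, 1:]",
      OF X_ideal_ideal[of f] embed_u_1 embed_u_add embed_u_mult, folded S_def]
  have "embed_u [:0, 1:] ^ 1 * var_v - embed_u [:f:] \<in> X_ideal f"
    using var_u_var_v_cong by (simp add: embed_u_X embed_u_const)
  then have vS: "var_v \<in> S" unfolding S_def by blast
  have "z \<in> S"
  proof (induction z rule: pCons_induct)
    case 0
    show ?case using closed(1)[of 0] unfolding embed_u_def by simp
  next
    case (pCons c z)
    have "pCons c z = embed_u c + var_v * z" unfolding embed_u_def var_v_def by simp
    then show ?case using closed(2)[OF closed(1) closed(3)[OF vS pCons.IH]] by simp
  qed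
  then show ?thesis unfolding S_def by blast
qed

lemma embed_v_cover:
  fixes f :: "'r::idom"
  shows "\<exists>N a. embed_v [:0, 1:] ^ N * z - embed_v a \<in> X_ideal f"
proof -
  define S where "S = {z. \<exists>N a. embed_v [:0, 1:] ^ N * z - embed_v a \<in> X_ideal f}"
  note closed = chart_cover_closed[where X = "[:0, 1:]",
      OF X_ideal_ideal[of f] embed_v_1 embed_v_add embed_v_mult, folded S_def]
  have "embed_v [:0, 1:] ^ 1 * var_u - embed_v [:f:] \<in> X_ideal f"
    using var_v_var_u_cong by (simp add: embed_v_X embed_v_const)
  then have uS: "var_u \<in> S" unfolding S_def by blast
  have vS: "var_v \<in> S" using closed(1)[of "[:0, 1:]"] by (simp add: embed_v_X)
  have cS: "[:c:] \<in> S" for c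
  proof (induction c rule: pCons_induct)
    case 0
    show ?case using closed(1)[of 0] unfolding embed_v_def by simp
  next
    case (pCons r c)
    have "[:pCons r c:] = embed_v [:r:] + var_u * [:c:]"
      unfolding embed_v_const const_uv_def var_u_def by simp
    then show ?case using closed(2)[OF closed(1) closed(3)[OF uS pCons.IH]] by simp
  qed
  have "z \<in> S"
  proof (induction z rule: pCons_induct)
    case 0
    show ?case using cS[of 0] by simp
  next
    case (pCons c z)
    have "pCons c z = [:c:] + var_v * z" unfolding var_v_def by simp
    then show ?case using closed(2)[OF cS closed(3)[OF vS pCons.IH]] by simp
  qed
  then show ?thesis unfolding S_def by blast
qed

lemma X_ideal_prime:
  fixes f :: "'r::idom"
  assumes f: "f \<noteq> 0"
  shows "tc_prime_ideal (X_ideal f)"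
proof -
  have I: "tc_ideal (X_ideal f)" by (rule X_ideal_ideal)
  have "1 \<notin> X_ideal f" using embed_u_in_X_ideal[of 1 f] by (auto simp: embed_u_1)
  moreover have u_cancel: "var_u ^ N * z \<in> X_ideal f \<Longrightarrow> z \<in> X_ideal f" for N z
    by (induction N) (auto simp: var_u_cancel[OF f] mult.assoc)
  moreover have "x \<in> X_ideal f \<or> y \<in> X_ideal f" if xy: "x * y \<in> X_ideal f" for x y
  proof -
    obtain N a where a: "var_u ^ N * x - embed_u a \<in> X_ideal f"
      using embed_u_cover[of x f] by (auto simp: embed_u_X)
    obtain M b where b: "var_u ^ M * y - embed_u b \<in> X_ideal f"
      using embed_u_cover[of y f] by (auto simp: embed_u_X)
    have "(var_u ^ N * x) * (var_u ^ M * y) - embed_u a * embed_u b \<in> X_ideal f"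
      using ideal_diff_mult[OF I a b] .
    moreover have "(var_u ^ N * x) * (var_u ^ M * y) \<in> X_ideal f"
      using tc_idealD(3)[OF I xy, of "var_u ^ N * var_u ^ M"] by (simp add: ac_simps)
    ultimately have "embed_u (a * b) \<in> X_ideal f"
      using ideal_diff_mem[OF I order_refl ideal_diff_sym[OF I]] by (simp add: embed_u_mult)
    then have "a * b = 0" by (rule embed_u_in_X_ideal)
    then have "a = 0 \<or> b = 0" by simp
    then show ?thesis using a b u_cancel by (auto simp: embed_u_def)
  qed
  ultimately show ?thesis unfolding tc_prime_ideal_def using I by blast
qed

lemma coeff_u_to_0: "coeff (u_to_0 x) n = coeff (coeff x n) 0"
  unfolding u_to_0_def by (simp add: coeff_map_poly)

lemma u_to_0_diff: "u_to_0 (x - y) = u_to_0 x - u_to_0 y"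
  by (intro poly_eqI) (simp add: coeff_u_to_0)

lemma u_to_0_mult: "u_to_0 (x * y) = u_to_0 x * u_to_0 y"
  by (intro poly_eqI) (simp add: coeff_u_to_0 coeff_mult coeff_sum coeff_mult_0)

lemma u_to_0_power: "u_to_0 (x ^ n) = u_to_0 x ^ n"
proof (induction n)
  case 0
  show ?case unfolding u_to_0_def by simp
qed (simp add: u_to_0_mult)

lemma u_to_0_embed_v: "u_to_0 (embed_v g) = g"
  by (intro poly_eqI) (simp add: coeff_u_to_0 coeff_embed_v)

lemma u_to_0_var_v: "u_to_0 var_v = [:0, 1:]"
  unfolding var_v_def u_to_0_def by (simp add: map_poly_pCons)

lemma u_to_0_X_ideal:
  fixes f :: "'r::idom"
  assumes "x \<in> X_ideal f"
  shows "[:f:] dvd u_to_0 x"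
proof -
  obtain h where h: "x = uv_minus f * h" using assms unfolding X_ideal_eq by blast
  have "u_to_0 (uv_minus f) = [:- f:]" unfolding uv_minus_def u_to_0_def
    by (simp add: map_poly_pCons)
  then have "u_to_0 x = [:f:] * (- u_to_0 h)" using h by (simp add: u_to_0_mult)
  then show ?thesis by (rule dvdI)
qed

lemma var_u_dvd_sub_u_to_0:
  fixes x :: "'r::idom poly poly"
  shows "var_u dvd x - embed_v (u_to_0 x)"
proof -
  have "poly (coeff (x - embed_v (u_to_0 x)) n) 0 = 0" for n
    by (simp add: coeff_embed_v coeff_u_to_0 poly_0_coeff_0)
  then have "[:- 0, 1:] dvd coeff (x - embed_v (u_to_0 x)) n" for n
    using poly_eq_0_iff_dvd by blast
  then show ?thesis unfolding var_u_def const_poly_dvd_iff by simp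
qed

lemma X_notin_const_dvd_ideal:
  assumes "prime_elem (p::'r::idom)"
  shows "[:0, 1:] \<notin> const_dvd_ideal p"
proof
  assume "[:0, 1:] \<in> const_dvd_ideal p"
  then have "p dvd coeff [:0, 1:] 1" unfolding const_dvd_ideal_def const_poly_dvd_iff by blast
  then show False using prime_elem_not_unit[OF assms] by simp
qed



locale uv_surface =
  fixes f :: "'r::idom" and s :: nat and p :: "nat \<Rightarrow> 'r" and a :: "nat \<Rightarrow> nat"
  assumes fd: "factorial_domain TYPE('r)"
    and p_prime: "\<And>i. i < s \<Longrightarrow> prime_elem (p i)"
    and p_nonassoc: "\<And>i j. i < s \<Longrightarrow> j < s \<Longrightarrow> i \<noteq> j \<Longrightarrow> \<not> (p i dvd p j \<and> p j dvd p i)"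
    and a_pos: "\<And>i. i < s \<Longrightarrow> a i > 0"
    and f_eq: "f = (\<Prod>i<s. p i ^ a i)"
begin

abbreviation XI :: "'r poly poly set" where "XI \<equiv> X_ideal f"

abbreviation H1 :: "'r poly poly set set" where "H1 \<equiv> height_one_primes_mod XI"

lemma f_nonzero: "f \<noteq> 0"
  unfolding f_eq using p_prime prime_elem_not_zeroI by (auto simp: prod_zero_iff)

lemma XI_prime: "tc_prime_ideal XI"
  using X_ideal_prime[OF f_nonzero] .

lemma XI_ideal: "tc_ideal XI"
  using X_ideal_ideal .

sublocale U: chart embed_u XI "[:0, 1:]"
  by unfold_locales
    (simp_all add: embed_u_1 embed_u_add embed_u_mult XI_prime embed_u_in_X_ideal embed_u_cover)

sublocale V: chart embed_v XI "[:0, 1:]"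
  by unfold_locales
    (simp_all add: embed_v_1 embed_v_add embed_v_mult XI_prime embed_v_in_X_ideal embed_v_cover)

lemma var_u_power_notin: "var_u ^ N \<notin> XI"
  using U.w_power_notin by (simp add: embed_u_X)

lemma var_u_notin: "var_u \<notin> XI"
  using var_u_power_notin[of 1] by simp

text \<open>K i is the prime (u, p_i), the component {u = p_i = 0} of X. It is the extension of the
  prime (p_i) of R[v] in the chart where v is inverted.\<close>

definition K :: "nat \<Rightarrow> 'r poly poly set" where
  "K i = V.extend (const_dvd_ideal (p i))"

lemma K_height_one: "i < s \<Longrightarrow> K i \<in> H1"
  unfolding K_def
  using V.extend_height_one min_nonzero_prime_const_dvd_ideal[OF fd p_prime]
    X_notin_const_dvd_ideal[OF p_prime]
  by blast

lemma K_uniformizer: "i < s \<Longrightarrow> uniformizer_at XI (K i) (const_uv (p i))"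
  unfolding K_def
  using V.uniformizer_at_extend[OF min_nonzero_prime_const_dvd_ideal[OF fd p_prime]
      X_notin_const_dvd_ideal[OF p_prime] separating_uniformizer_const_dvd_ideal[OF fd p_prime]]
  by (simp add: embed_v_const)

lemma K_prime: "i < s \<Longrightarrow> tc_prime_ideal (K i)"
  unfolding K_def
    using V.extend_prime const_dvd_ideal_prime[OF p_prime] X_notin_const_dvd_ideal[OF p_prime]
  by blast

lemma const_uv_in_K_iff: "i < s \<Longrightarrow> const_uv r \<in> K i \<longleftrightarrow> p i dvd r"
  unfolding K_def
  using V.psi_in_extend_iff[OF const_dvd_ideal_prime[OF p_prime] X_notin_const_dvd_ideal[OF p_prime],
      of i "[:r:]"]
  by (simp add: embed_v_const const_dvd_ideal_def)

lemma var_v_notin_K: "i < s \<Longrightarrow> var_v \<notin> K i"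
  unfolding K_def
  using V.w_power_notin_extend[OF const_dvd_ideal_prime[OF p_prime] X_notin_const_dvd_ideal[OF p_prime],
      of i 1]
  by (simp add: embed_v_X)

lemma p_dvd_f: "i < s \<Longrightarrow> p i dvd f"
proof -
  assume i: "i < s"
  have "p i dvd p i ^ a i" using a_pos[OF i] by (simp add: dvd_power)
  also have "\<dots> dvd f" unfolding f_eq using i by (intro dvd_prodI) auto
  finally show ?thesis .
qed

lemma var_u_in_K: "i < s \<Longrightarrow> var_u \<in> K i"
proof -
  assume i: "i < s"
  have "embed_v [:0, 1:] ^ 1 * var_u - embed_v [:f:] \<in> XI"
    using var_v_var_u_cong by (simp add: embed_v_X embed_v_const)
  moreover have "[:f:] \<in> const_dvd_ideal (p i)" using p_dvd_f[OF i]
    by (simp add: const_dvd_ideal_def)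
  ultimately show ?thesis unfolding K_def V.extend_def by blast
qed

lemma K_inj:
  assumes "i < s" "j < s" "K i = K j"
  shows "i = j"
proof (rule ccontr)
  assume "i \<noteq> j"
  have "const_uv (p i) \<in> K i" "const_uv (p j) \<in> K j"
    using const_uv_in_K_iff[OF assms(1)] const_uv_in_K_iff[OF assms(2)] by simp_all
  then have "const_uv (p i) \<in> K j" "const_uv (p j) \<in> K i" using assms(3) by simp_all
  then have "p j dvd p i" "p i dvd p j"
    using const_uv_in_K_iff[OF assms(2)] const_uv_in_K_iff[OF assms(1)] by blast+
  then show False using p_nonassoc[OF assms(1,2) \<open>i \<noteq> j\<close>] by blast
qed

text \<open>Setting u = 0 turns membership in K i into divisibility by p_i in R[v].\<close>

lemma K_subset:
  assumes i: "i < s" and Q: "tc_ideal Q" "var_u \<in> Q" "const_uv (p i) \<in> Q"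
  shows "K i \<subseteq> Q"
proof
  fix x assume "x \<in> K i"
  then obtain N g where g: "[:p i:] dvd g" "var_v ^ N * x - embed_v g \<in> XI"
    unfolding K_def V.extend_def const_dvd_ideal_def by (auto simp: embed_v_X)
  have "[:f:] dvd u_to_0 (var_v ^ N * x - embed_v g)" using u_to_0_X_ideal[OF g(2)] .
  moreover have "u_to_0 (var_v ^ N * x - embed_v g) = [:0, 1:] ^ N * u_to_0 x - g"
    by (simp add: u_to_0_diff u_to_0_mult u_to_0_power u_to_0_var_v u_to_0_embed_v)
  moreover have "[:p i:] dvd [:f:]" using p_dvd_f[OF i] by simp
  ultimately have "[:p i:] dvd ([:0, 1:] ^ N * u_to_0 x - g) + g"
    using dvd_add[OF _ g(1)] dvd_trans[of "[:p i:]" "[:f:]"] by metis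
  then have "[:0, 1:] ^ N * u_to_0 x \<in> const_dvd_ideal (p i)" unfolding const_dvd_ideal_def by simp
  moreover have "[:0, 1:] ^ N \<notin> const_dvd_ideal (p i)"
    using prime_ideal_power_notin[OF const_dvd_ideal_prime X_notin_const_dvd_ideal] p_prime[OF i]
      by blast
  ultimately have "u_to_0 x \<in> const_dvd_ideal (p i)"
    using tc_prime_idealD(2)[OF const_dvd_ideal_prime[OF p_prime[OF i]]] by blast
  then obtain g' where g': "u_to_0 x = [:p i:] * g'" unfolding const_dvd_ideal_def by blast
  obtain h where h: "x - embed_v (u_to_0 x) = var_u * h" using var_u_dvd_sub_u_to_0[of x] by blast
  have "x = (x - embed_v (u_to_0 x)) + embed_v (u_to_0 x)" by simp
  also have "\<dots> = var_u * h + const_uv (p i) * embed_v g'"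
    unfolding h by (simp only: g' embed_v_mult embed_v_const)
  finally have "x = var_u * h + const_uv (p i) * embed_v g'" .
  moreover have "var_u * h + const_uv (p i) * embed_v g' \<in> Q"
    using tc_idealD(2)[OF Q(1) tc_idealD(4)[OF Q(1) Q(2)] tc_idealD(4)[OF Q(1) Q(3)]] .
  ultimately show "x \<in> Q" by simp
qed

lemma height_one_cases:
  assumes Q: "Q \<in> H1"
  obtains "var_u \<notin> Q" | i where "i < s" "Q = K i"
proof (cases "var_u \<in> Q")
  case True
  have Qp: "tc_prime_ideal Q" "XI \<subset> Q" and no: "\<not> (\<exists>Q'. tc_prime_ideal Q' \<and> XI \<subset> Q' \<and> Q' \<subset> Q)"
    using Q unfolding height_one_primes_mod_def by blast+
  have iQ: "tc_ideal Q" using tc_prime_idealD(1)[OF Qp(1)] .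
  have "var_u * var_v \<in> Q" using tc_idealD(4)[OF iQ True] .
  then have "const_uv f \<in> Q"
    using ideal_diff_mem[OF iQ _ ideal_diff_sym[OF XI_ideal var_u_var_v_cong]] Qp(2)
    by blast
  then have "(\<Prod>i<s. const_uv (p i) ^ a i) \<in> Q" unfolding f_eq
    by (simp add: const_uv_prod const_uv_power)
  then obtain i where i: "i < s" "const_uv (p i) ^ a i \<in> Q" using prime_ideal_prod[OF Qp(1)]
    by blast
  then have "const_uv (p i) \<in> Q" using prime_ideal_power_notin[OF Qp(1)] by blast
  then have "K i \<subseteq> Q" by (rule K_subset[OF i(1) iQ True])
  moreover have "tc_prime_ideal (K i)" "XI \<subset> K i"
    using K_height_one[OF i(1)] unfolding height_one_primes_mod_def by blast+
  ultimately have "Q = K i" using no by blast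
  then show thesis using that(2) i(1) by blast
qed (rule that(1))

lemma has_uniformizers_XI: "has_uniformizers XI"
  unfolding has_uniformizers_def
proof (intro conjI ballI)
  show "tc_prime_ideal XI" by (rule XI_prime)
  fix Q assume Q: "Q \<in> H1"
  then show "\<exists>t. uniformizer_at XI Q t"
  proof (cases rule: height_one_cases)
    case 1
    then have "U.w \<notin> Q" by (simp add: embed_u_X)
    note c = U.contract_height_one[OF Q this]
    obtain t where "separating_uniformizer (U.contract Q) t"
      by (rule min_nonzero_prime_separating_uniformizer[OF fd c(1)])
    then have "uniformizer_at XI (U.extend (U.contract Q)) (embed_u t)"
      using U.uniformizer_at_extend c by blast
    then show ?thesis using c(2) by auto
  next
    case (2 i)
    then show ?thesis using K_uniformizer by blast
  qed
qed

end



section \<open>Divisors on the surface\<close>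

context uv_surface
begin

lemma embed_u_notin: "y \<noteq> 0 \<Longrightarrow> embed_u y \<notin> XI"
  using embed_u_in_X_ideal by blast

lemma const_uv_notin: "r \<noteq> 0 \<Longrightarrow> const_uv r \<notin> XI"
  using embed_u_notin[of "[:r:]"] by (simp add: embed_u_const)

lemma mult_notin: "y \<notin> XI \<Longrightarrow> z \<notin> XI \<Longrightarrow> y * z \<notin> XI"
  using tc_prime_idealD(4)[OF XI_prime] .

lemma chart_u_rep:
  obtains N \<alpha> where "var_u ^ N * x - embed_u \<alpha> \<in> XI"
  using U.cover[of x] by (auto simp: embed_u_X)

lemma U_extend_off_u:
  assumes "min_nonzero_prime q" "[:0, 1:] \<notin> q"
  shows "U.extend q \<in> H1" "var_u \<notin> U.extend q"
  using U.extend_height_one[OF assms]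
    U.w_power_notin_extend[OF min_nonzero_primeD(1)[OF assms(1)] assms(2), of 1]
  by (simp_all add: embed_u_X)

lemma div_mod_finite:
  assumes x: "x \<notin> XI"
  shows "finite {P. div_mod XI x P \<noteq> 0}"
proof -
  obtain N \<alpha> where h: "var_u ^ N * x - embed_u \<alpha> \<in> XI" by (rule chart_u_rep)
  have \<alpha>: "\<alpha> \<noteq> 0" using U.cover_nonzero[OF x] h by (simp add: embed_u_X)
  have "{P. div_mod XI x P \<noteq> 0} \<subseteq> K ` {..<s} \<union> U.extend ` {q. min_nonzero_prime q \<and> \<alpha> \<in> q}"
  proof
    fix P assume "P \<in> {P. div_mod XI x P \<noteq> 0}"
    then have xP: "x \<in> P" and P: "P \<in> H1" using div_mod_nonzero[OF has_uniformizers_XI] by blast+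
    from P show "P \<in> K ` {..<s} \<union> U.extend ` {q. min_nonzero_prime q \<and> \<alpha> \<in> q}"
    proof (cases rule: height_one_cases)
      case 1
      then have "U.w \<notin> P" by (simp add: embed_u_X)
      note c = U.contract_height_one[OF P this]
      have Pp: "tc_ideal P" "XI \<subseteq> P"
        using P tc_prime_idealD(1) unfolding height_one_primes_mod_def by blast+
      have "var_u ^ N * x \<in> P" using tc_idealD(3)[OF Pp(1) xP] .
      then have "embed_u \<alpha> \<in> P" using ideal_diff_mem[OF Pp ideal_diff_sym[OF XI_ideal h]] by blast
      then have "\<alpha> \<in> U.contract P" unfolding U.contract_def by simp
      then show ?thesis using c(1,2) by blast
    qed blast
  qed
  moreover have "finite (K ` {..<s} \<union> U.extend ` {q. min_nonzero_prime q \<and> \<alpha> \<in> q})"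
    using finite_min_nonzero_primes_containing[OF fd \<alpha>] by simp
  ultimately show ?thesis by (rule finite_subset)
qed

lemma div_var_u_K:
  assumes j: "j < s"
  shows "div_mod XI var_u (K j) = int (a j)"
proof -
  define e where "e = (\<Prod>i\<in>{..<s} - {j}. p i ^ a i)"
  have "f = p j ^ a j * e" unfolding f_eq e_def using j by (subst prod.remove[of "{..<s}" j]) auto
  then have "var_v * var_u - const_uv e * const_uv (p j) ^ a j \<in> XI"
    using var_v_var_u_cong[of f] by (simp add: const_uv_mult const_uv_power ac_simps)
  moreover have "\<not> p j dvd e"
  proof
    assume "p j dvd e"
    then obtain i where i: "i \<in> {..<s} - {j}" "p j dvd p i ^ a i"
      using prime_elem_dvd_prod[OF p_prime[OF j]] unfolding e_def by blast
    then have "p j dvd p i" using prime_elem_dvd_power[OF p_prime[OF j]] by blast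
    moreover have "p i dvd p j"
      using prime_elem_dvd_prime_elem_sym[OF p_prime[OF j] p_prime] calculation i(1)
      by blast
    ultimately show False using p_nonassoc[OF j, of i] i(1) by blast
  qed
  then have "const_uv e \<notin> K j" using const_uv_in_K_iff[OF j] by simp
  ultimately have "assoc_power_at XI (K j) (const_uv (p j)) var_u (a j)"
    unfolding assoc_power_at_def using var_v_notin_K[OF j] by blast
  then show ?thesis
    using valuation_mod_eq[OF K_uniformizer[OF j]] K_height_one[OF j] unfolding div_mod_def by simp
qed

lemma principal_divisor_at:
  assumes Q: "Q \<in> H1" "var_u \<notin> Q"
  obtains g where "g \<notin> XI" "div_mod XI g Q = 1"
    "\<And>Q'. Q' \<in> H1 \<Longrightarrow> var_u \<notin> Q' \<Longrightarrow> Q' \<noteq> Q \<Longrightarrow> div_mod XI g Q' = 0"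
proof -
  have "U.w \<notin> Q" using Q(2) by (simp add: embed_u_X)
  note c = U.contract_height_one[OF Q(1) this]
  obtain t where t: "separating_uniformizer (U.contract Q) t"
    by (rule min_nonzero_prime_separating_uniformizer[OF fd c(1)])
  have g: "uniformizer_at XI Q (embed_u t)" using U.uniformizer_at_extend[OF c(1,3) t] c(2) by simp
  have "assoc_power_at XI Q (embed_u t) (embed_u t) 1"
    unfolding assoc_power_at_def using uniformizer_atD(1)[OF g] ideal_diff_refl[OF XI_ideal]
    by (intro exI[of _ 1]) (simp add: tc_prime_idealD(3))
  then have "div_mod XI (embed_u t) Q = 1"
    using valuation_mod_eq[OF g] Q(1) unfolding div_mod_def by simp
  moreover have "div_mod XI (embed_u t) Q' = 0" if Q': "Q' \<in> H1" "var_u \<notin> Q'" "Q' \<noteq> Q" for Q'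
  proof -
    have "embed_u t \<notin> Q'"
      using U.height_one_eq_extend[OF c(1,3) t Q'(1)] Q'(2,3) c(2) by (auto simp: embed_u_X)
    then show ?thesis by (rule div_mod_notin[OF has_uniformizers_XI])
  qed
  ultimately show thesis using that uniformizer_at_notin[OF g] by blast
qed

lemma div_chart_rep:
  assumes x: "x \<notin> XI" and h: "var_u ^ N * x - embed_u \<alpha> \<in> XI"
  shows "div_mod XI (embed_u \<alpha>) P = int N * div_mod XI var_u P + div_mod XI x P"
proof -
  have "div_mod XI (embed_u \<alpha>) P = div_mod XI (var_u ^ N * x) P"
    using div_mod_cong[OF has_uniformizers_XI mult_notin[OF var_u_power_notin x] h] .
  also have "\<dots> = div_mod XI (var_u ^ N) P + div_mod XI x P"
    using div_mod_mult[OF has_uniformizers_XI var_u_power_notin x] .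
  finally show ?thesis using div_mod_power[OF has_uniformizers_XI var_u_notin] by simp
qed

lemma div_embed_u_fract_prime:
  assumes P: "prime_elem P" "\<not> P dvd [:0, 1:]" and y: "y \<noteq> 0"
  shows "div_mod XI (embed_u y) (U.extend (fract_dvd_ideal P)) =
    int (multiplicity P (fract_poly y))"
proof -
  have X: "[:0, 1:] \<notin> fract_dvd_ideal P" using P(2) unfolding fract_dvd_ideal_def
    by (simp add: map_poly_pCons)
  have q: "min_nonzero_prime (fract_dvd_ideal P)" "tc_prime_ideal (fract_dvd_ideal P)"
    using min_nonzero_prime_fract_dvd_ideal[OF P(1)] fract_dvd_ideal_prime[OF P(1)] .
  obtain t \<kappa> where t: "\<kappa> \<noteq> 0" "fract_poly t = smult \<kappa> P" "\<And>p. prime_elem p \<Longrightarrow> \<not> [:p:] dvd t"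
    using fract_prime_primitive_multiple[OF fd P(1)] by blast
  have u: "separating_uniformizer (fract_dvd_ideal P) t"
    by (rule separating_uniformizer_fract_dvd_ideal[OF fd P(1) t])
  obtain e n m where em: "e \<notin> fract_dvd_ideal P" "m \<notin> fract_dvd_ideal P" "e * y = t ^ n * m"
    using u y unfolding separating_uniformizer_def by blast
  have "embed_u e * embed_u y - embed_u m * embed_u t ^ n = 0"
    using arg_cong[OF em(3), of embed_u] by (simp add: embed_u_mult embed_u_power ac_simps)
  moreover have "embed_u e \<notin> U.extend (fract_dvd_ideal P)"
    "embed_u m \<notin> U.extend (fract_dvd_ideal P)"
    using U.psi_in_extend_iff[OF q(2) X] em(1,2) by blast+
  ultimately have "assoc_power_at XI (U.extend (fract_dvd_ideal P)) (embed_u t) (embed_u y) n"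
    unfolding assoc_power_at_def using tc_idealD(1)[OF XI_ideal] by (metis)
  then have "valuation_mod XI (U.extend (fract_dvd_ideal P)) (embed_u y) = int n"
    by (rule valuation_mod_eq[OF U.uniformizer_at_extend[OF q(1) X u]])
  moreover have "multiplicity P (fract_poly y) = n"
    by (rule fract_multiplicity_eq_exponent[OF P(1) t(1,2) em y])
  ultimately show ?thesis using U_extend_off_u(1)[OF q(1) X] unfolding div_mod_def by simp
qed

text \<open>Both sides are the exponent of p_j in r, as const_uv (p j) is a uniformizer at both
  primes.\<close>

lemma div_const_uv_K:
  assumes j: "j < s" and r: "r \<noteq> 0"
  shows "div_mod XI (const_uv r) (U.extend (const_dvd_ideal (p j))) = div_mod XI (const_uv r) (K j)"
proof -
  have pp: "prime_elem (p j)" using p_prime[OF j] .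
  obtain n r' where h: "r = p j ^ n * r'" "\<not> p j dvd r'" using prime_power_decomp[OF fd pp r]
    by blast
  have X: "[:0, 1:] \<notin> const_dvd_ideal (p j)" using X_notin_const_dvd_ideal[OF pp] .
  have q: "min_nonzero_prime (const_dvd_ideal (p j))" "tc_prime_ideal (const_dvd_ideal (p j))"
    using min_nonzero_prime_const_dvd_ideal[OF fd pp] const_dvd_ideal_prime[OF pp] .
  have eq: "1 * const_uv r - const_uv r' * const_uv (p j) ^ n \<in> XI"
    using h(1) tc_idealD(1)[OF XI_ideal] by (simp add: const_uv_mult const_uv_power ac_simps)
  have "const_uv r' \<notin> U.extend (const_dvd_ideal (p j))"
    using U.psi_in_extend_iff[OF q(2) X, of "[:r':]"] h(2)
      by (simp add: embed_u_const const_dvd_ideal_def)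
  then have "assoc_power_at XI (U.extend (const_dvd_ideal (p j))) (const_uv (p j)) (const_uv r) n"
    unfolding assoc_power_at_def using eq tc_prime_idealD(3)[OF U.extend_prime[OF q(2) X]] by blast
  moreover have "uniformizer_at XI (U.extend (const_dvd_ideal (p j))) (const_uv (p j))"
    using U.uniformizer_at_extend[OF q(1) X separating_uniformizer_const_dvd_ideal[OF fd pp]]
    by (simp add: embed_u_const)
  ultimately have "div_mod XI (const_uv r) (U.extend (const_dvd_ideal (p j))) = int n"
    using valuation_mod_eq U_extend_off_u(1)[OF q(1) X] unfolding div_mod_def by simp
  moreover have "assoc_power_at XI (K j) (const_uv (p j)) (const_uv r) n"
    unfolding assoc_power_at_def
      using eq tc_prime_idealD(3)[OF K_prime[OF j]] const_uv_in_K_iff[OF j] h(2)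
    by blast
  then have "div_mod XI (const_uv r) (K j) = int n"
    using valuation_mod_eq[OF K_uniformizer[OF j]] K_height_one[OF j] unfolding div_mod_def by simp
  ultimately show ?thesis by simp
qed


lemma div_const_uv_embed_u_var_u_power:
  assumes "r \<noteq> 0" "z \<noteq> 0"
  shows "div_mod XI (const_uv r * (embed_u z * var_u ^ k)) P =
    div_mod XI (const_uv r) P + div_mod XI (embed_u z) P + int k * div_mod XI var_u P"
  using div_mod_mult[OF has_uniformizers_XI const_uv_notin[OF assms(1)]
      mult_notin[OF embed_u_notin[OF assms(2)] var_u_power_notin]]
    div_mod_mult[OF has_uniformizers_XI embed_u_notin[OF assms(2)] var_u_power_notin]
    div_mod_power[OF has_uniformizers_XI var_u_notin] by simp

lemma div_chart_rep_off_u: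
  assumes "x \<notin> XI" "var_u ^ N * x - embed_u \<alpha> \<in> XI" "min_nonzero_prime q" "[:0, 1:] \<notin> q"
  shows "div_mod XI (embed_u \<alpha>) (U.extend q) = div_mod XI x (U.extend q)"
  using div_chart_rep[OF assms(1,2)]
    div_mod_notin[OF has_uniformizers_XI U_extend_off_u(2)[OF assms(3,4)]]
  by simp

text \<open>A principal divisor that vanishes at every height-one prime not containing u is a multiple
  of div(u): in the chart where u is inverted the function becomes an element of Frac(R)[u]
  with no zeros or poles except at u = 0, i.e. a constant times a power of u, and constants have
  the same valuation at K j as in that chart.\<close>

lemma principal_divisor_off_u:
  assumes x: "x \<notin> XI" and y: "y \<notin> XI"
    and eq: "\<And>Q. Q \<in> H1 \<Longrightarrow> var_u \<notin> Q \<Longrightarrow> div_mod XI x Q = div_mod XI y Q"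
  shows "\<exists>k. \<forall>j<s. div_mod XI x (K j) - div_mod XI y (K j) = k * int (a j)"
proof -
  obtain N \<alpha> where hx: "var_u ^ N * x - embed_u \<alpha> \<in> XI" by (rule chart_u_rep)
  obtain M \<beta> where hy: "var_u ^ M * y - embed_u \<beta> \<in> XI" by (rule chart_u_rep)
  have \<alpha>: "\<alpha> \<noteq> 0" and \<beta>: "\<beta> \<noteq> 0"
    using U.cover_nonzero[OF x] U.cover_nonzero[OF y] hx hy by (simp_all add: embed_u_X)
  have off_u: "div_mod XI (embed_u \<alpha>) (U.extend q) = div_mod XI (embed_u \<beta>) (U.extend q)"
    if q: "min_nonzero_prime q" "[:0, 1:] \<notin> q" for q
    using div_chart_rep_off_u[OF x hx q] div_chart_rep_off_u[OF y hy q] eq U_extend_off_u[OF q]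
      by simp
  have "multiplicity P (fract_poly \<alpha>) = multiplicity P (fract_poly \<beta>)"
    if P: "prime_elem P" "\<not> P dvd [:0, 1:]" for P
  proof -
    have "[:0, 1:] \<notin> fract_dvd_ideal P" using P(2) unfolding fract_dvd_ideal_def
      by (simp add: map_poly_pCons)
    then show ?thesis
      using off_u[OF min_nonzero_prime_fract_dvd_ideal[OF P(1)]]
        div_embed_u_fract_prime[OF P \<alpha>] div_embed_u_fract_prime[OF P \<beta>] by simp
  qed
  then obtain r1 r2 k1 k2 where r: "r1 \<noteq> 0" "r2 \<noteq> 0"
    and AB: "smult r2 (\<alpha> * [:0, 1:] ^ k2) = smult r1 (\<beta> * [:0, 1:] ^ k1)"
    by (rule fract_poly_assoc_up_to_X[OF \<alpha> \<beta>])
  have "const_uv r2 * (embed_u \<alpha> * var_u ^ k2) = const_uv r1 * (embed_u \<beta> * var_u ^ k1)"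
    using arg_cong[OF AB, of embed_u]
      by (simp add: embed_u_smult embed_u_mult embed_u_power embed_u_X)
  then have key:
    "div_mod XI (const_uv r2) P + div_mod XI (embed_u \<alpha>) P + int k2 * div_mod XI var_u P =
      div_mod XI (const_uv r1) P + div_mod XI (embed_u \<beta>) P + int k1 * div_mod XI var_u P" for P
    using div_const_uv_embed_u_var_u_power[OF r(2) \<alpha>, of k2 P]
      div_const_uv_embed_u_var_u_power[OF r(1) \<beta>, of k1 P]
    by simp
  show ?thesis
  proof (intro exI[of _ "int M + int k1 - int N - int k2"] allI impI)
    fix j assume j: "j < s"
    have q: "min_nonzero_prime (const_dvd_ideal (p j))" "[:0, 1:] \<notin> const_dvd_ideal (p j)"
      using min_nonzero_prime_const_dvd_ideal[OF fd p_prime[OF j]]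
        X_notin_const_dvd_ideal[OF p_prime[OF j]] .
    have "div_mod XI var_u (U.extend (const_dvd_ideal (p j))) = 0"
      using div_mod_notin[OF has_uniformizers_XI] U_extend_off_u(2)[OF q] by blast
    then have "div_mod XI (const_uv r2) (K j) = div_mod XI (const_uv r1) (K j)"
      using key[of "U.extend (const_dvd_ideal (p j))"] off_u[OF q]
        div_const_uv_K[OF j r(1)] div_const_uv_K[OF j r(2)] by simp
    then show "div_mod XI x (K j) - div_mod XI y (K j) =
        (int M + int k1 - int N - int k2) * int (a j)"
      using key[of "K j"] div_chart_rep[OF x hx, of "K j"] div_chart_rep[OF y hy, of "K j"]
        div_var_u_K[OF j] by (simp add: algebra_simps)
  qed
qed

definition coord_divisor :: "(nat \<Rightarrow> int) \<Rightarrow> 'r poly poly set \<Rightarrow> int" where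
  "coord_divisor z = (\<lambda>P. \<Sum>i<s. if P = K i then z i else 0)"

lemma coord_divisor_K: "j < s \<Longrightarrow> coord_divisor z (K j) = z j"
proof -
  assume j: "j < s"
  have "(\<Sum>i<s. if K j = K i then z i else 0) = (\<Sum>i<s. if i = j then z i else 0)"
    using K_inj j by (intro sum.cong) auto
  then show ?thesis unfolding coord_divisor_def using j by simp
qed

lemma coord_divisor_off: "(\<And>i. i < s \<Longrightarrow> P \<noteq> K i) \<Longrightarrow> coord_divisor z P = 0"
  unfolding coord_divisor_def by simp

lemma coord_divisor_add:
  "coord_divisor (\<lambda>i. x i + y i) = (\<lambda>P. coord_divisor x P + coord_divisor y P)"
  unfolding coord_divisor_def by (auto simp: sum.distrib[symmetric] intro!: sum.cong)

lemma coord_divisor_carrier: "coord_divisor z \<in> carrier (weil_divisors_mod XI)"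
proof -
  have "{P. coord_divisor z P \<noteq> 0} \<subseteq> K ` {..<s}" using coord_divisor_off by blast
  moreover have "K ` {..<s} \<subseteq> H1" using K_height_one by blast
  ultimately show ?thesis unfolding weil_divisors_mod_simps by (auto intro: finite_subset)
qed

lemma div_var_u_eq: "div_mod XI var_u = coord_divisor (\<lambda>i. int (a i))"
proof
  fix P
  show "div_mod XI var_u P = coord_divisor (\<lambda>i. int (a i)) P"
  proof (cases "P \<in> H1")
    case True
    then show ?thesis
    proof (cases rule: height_one_cases)
      case 1
      then have "P \<noteq> K i" if "i < s" for i using var_u_in_K that by blast
      then show ?thesis using div_mod_notin[OF has_uniformizers_XI 1] coord_divisor_off by simp
    next
      case (2 j)
      then show ?thesis using div_var_u_K coord_divisor_K by simp
    qed
  next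
    case False
    then have "P \<noteq> K i" if "i < s" for i using K_height_one that by blast
    then show ?thesis using False coord_divisor_off unfolding div_mod_def by simp
  qed
qed

lemma principal_divisors_XI_subgroup:
  "subgroup (principal_divisors_mod XI) (weil_divisors_mod XI)"
  using principal_divisors_subgroup[OF has_uniformizers_XI div_mod_finite] .

lemma divisor_on_K:
  assumes D: "D \<in> carrier (weil_divisors_mod XI)" and off: "\<And>Q. var_u \<notin> Q \<Longrightarrow> D Q = 0"
  shows "D = coord_divisor (\<lambda>i. if i < s then D (K i) else 0)"
proof
  fix P
  show "D P = coord_divisor (\<lambda>i. if i < s then D (K i) else 0) P"
  proof (cases "\<exists>j<s. P = K j")
    case True
    then show ?thesis using coord_divisor_K by auto
  next
    case False
    have "D P = 0"
    proof (cases "P \<in> H1")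
      case True
      then show ?thesis using False off by (cases rule: height_one_cases) auto
    qed (use D in \<open>auto simp: weil_divisors_mod_simps\<close>)
    then show ?thesis using coord_divisor_off False by simp
  qed
qed

lemma principal_divisor_concentrated:
  assumes Q: "Q \<in> H1" "var_u \<notin> Q"
  shows "\<exists>x y. x \<notin> XI \<and> y \<notin> XI \<and> div_mod XI x Q - div_mod XI y Q = c \<and>
    (\<forall>P. P \<noteq> Q \<longrightarrow> var_u \<notin> P \<longrightarrow> div_mod XI x P - div_mod XI y P = 0)"
proof -
  obtain g where g: "g \<notin> XI" "div_mod XI g Q = 1"
    "\<And>Q'. Q' \<in> H1 \<Longrightarrow> var_u \<notin> Q' \<Longrightarrow> Q' \<noteq> Q \<Longrightarrow> div_mod XI g Q' = 0"
    using principal_divisor_at[OF Q] by blast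
  obtain x y where xy: "x \<notin> XI" "y \<notin> XI"
    "(\<lambda>P. div_mod XI x P - div_mod XI y P) = (\<lambda>P. c * div_mod XI g P)"
    by (rule principal_divisor_int_multiple[OF has_uniformizers_XI g(1)])
  have "div_mod XI x P - div_mod XI y P = c * div_mod XI g P" for P using fun_cong[OF xy(3)] by simp
  moreover have "div_mod XI g P = 0" if "P \<noteq> Q" "var_u \<notin> P" for P
    using g(3)[OF _ that(2,1)] unfolding div_mod_def by auto
  ultimately show ?thesis using xy(1,2) g(2) by (intro exI[of _ x] exI[of _ y]) auto
qed

lemma divisor_decomp_step:
  assumes D: "D \<in> carrier (weil_divisors_mod XI)" and Q: "D Q \<noteq> 0" "var_u \<notin> Q"
  obtains x y where "x \<notin> XI" "y \<notin> XI"
    "(\<lambda>P. D P - (div_mod XI x P - div_mod XI y P)) \<in> carrier (weil_divisors_mod XI)"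
    "{P. D P - (div_mod XI x P - div_mod XI y P) \<noteq> 0 \<and> var_u \<notin> P} \<subseteq> {P. D P \<noteq> 0 \<and> var_u \<notin> P} - {Q}"
proof -
  interpret W: comm_group "weil_divisors_mod XI" by (rule weil_divisors_mod_comm_group)
  have "Q \<in> H1" using D Q(1) unfolding weil_divisors_mod_simps by blast
  then obtain x y where xy: "x \<notin> XI" "y \<notin> XI" "div_mod XI x Q - div_mod XI y Q = D Q"
    "\<forall>P. P \<noteq> Q \<longrightarrow> var_u \<notin> P \<longrightarrow> div_mod XI x P - div_mod XI y P = 0"
    using principal_divisor_concentrated[OF _ Q(2)] by blast
  have "(\<lambda>P. D P - (div_mod XI x P - div_mod XI y P)) =
      D \<otimes>\<^bsub>weil_divisors_mod XI\<^esub> (\<lambda>P. div_mod XI y P - div_mod XI x P)"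
    unfolding weil_divisors_mod_simps by auto
  then have "(\<lambda>P. D P - (div_mod XI x P - div_mod XI y P)) \<in> carrier (weil_divisors_mod XI)"
    using W.m_closed[OF D principal_divisor_in_carrier[OF has_uniformizers_XI
          div_mod_finite[OF xy(2)] div_mod_finite[OF xy(1)]]] by simp
  moreover have "{P. D P - (div_mod XI x P - div_mod XI y P) \<noteq> 0 \<and> var_u \<notin> P} \<subseteq>
      {P. D P \<noteq> 0 \<and> var_u \<notin> P} - {Q}"
  proof
    fix P assume "P \<in> {P. D P - (div_mod XI x P - div_mod XI y P) \<noteq> 0 \<and> var_u \<notin> P}"
    then have P: "D P - (div_mod XI x P - div_mod XI y P) \<noteq> 0" "var_u \<notin> P" by auto
    then have "P \<noteq> Q" using xy(3) by auto
    then show "P \<in> {P. D P \<noteq> 0 \<and> var_u \<notin> P} - {Q}" using P xy(4) by auto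
  qed
  ultimately show thesis using that xy(1,2) by blast
qed

text \<open>Every divisor is a principal divisor plus a combination of the K i: subtract a principal
  divisor concentrated at each prime off u = 0 in the support.\<close>

lemma divisor_decomp:
  "D \<in> carrier (weil_divisors_mod XI) \<Longrightarrow> \<exists>x y z. x \<notin> XI \<and> y \<notin> XI \<and> z \<in> carrier (Zpow s) \<and>
     D = (\<lambda>P. (div_mod XI x P - div_mod XI y P) + coord_divisor z P)"
proof (induction "card {Q. D Q \<noteq> 0 \<and> var_u \<notin> Q}" arbitrary: D rule: less_induct)
  case less
  let ?T = "{Q. D Q \<noteq> 0 \<and> var_u \<notin> Q}"
  have fin: "finite ?T" using less.prems unfolding weil_divisors_mod_simps
    by (auto intro: finite_subset)
  show ?case
  proof (cases "?T = {}")
    case True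
    then have "D = coord_divisor (\<lambda>i. if i < s then D (K i) else 0)"
      using divisor_on_K[OF less.prems] by blast
    moreover have "(\<lambda>i. if i < s then D (K i) else 0) \<in> carrier (Zpow s)" unfolding Zpow_simps
      by simp
    ultimately show ?thesis using tc_prime_idealD(3)[OF XI_prime] by (intro exI[of _ 1]) auto
  next
    case False
    then obtain Q where Q: "D Q \<noteq> 0" "var_u \<notin> Q" by blast
    obtain gp gm where g: "gp \<notin> XI" "gm \<notin> XI"
      and D': "(\<lambda>P. D P - (div_mod XI gp P - div_mod XI gm P)) \<in> carrier (weil_divisors_mod XI)"
      and T': "{P. D P - (div_mod XI gp P - div_mod XI gm P) \<noteq> 0 \<and> var_u \<notin> P} \<subseteq> ?T - {Q}"
      by (rule divisor_decomp_step[OF less.prems Q])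
    have "card {P. D P - (div_mod XI gp P - div_mod XI gm P) \<noteq> 0 \<and> var_u \<notin> P} \<le> card (?T - {Q})"
      using fin T' by (intro card_mono) auto
    also have "\<dots> < card ?T" using fin Q by (intro card_Diff1_less) auto
    finally have "\<exists>x y z. x \<notin> XI \<and> y \<notin> XI \<and> z \<in> carrier (Zpow s) \<and>
        (\<lambda>P. D P - (div_mod XI gp P - div_mod XI gm P)) =
          (\<lambda>P. (div_mod XI x P - div_mod XI y P) + coord_divisor z P)"
      using less.hyps[OF _ D'] by simp
    then obtain x y z where h: "x \<notin> XI" "y \<notin> XI" "z \<in> carrier (Zpow s)"
      "(\<lambda>P. D P - (div_mod XI gp P - div_mod XI gm P)) =
         (\<lambda>P. (div_mod XI x P - div_mod XI y P) + coord_divisor z P)"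
      by blast
    have "D = (\<lambda>P. (div_mod XI (x * gp) P - div_mod XI (y * gm) P) + coord_divisor z P)"
    proof
      fix P
      show "D P = (div_mod XI (x * gp) P - div_mod XI (y * gm) P) + coord_divisor z P"
        using fun_cong[OF h(4), of P] principal_divisor_mult[OF has_uniformizers_XI h(1,2) g, of P]
        by (simp add: algebra_simps)
    qed
    moreover have "x * gp \<notin> XI" "y * gm \<notin> XI" using mult_notin h(1,2) g by blast+
    ultimately show ?thesis using h(3)
      by (intro exI[of _ "x * gp"] exI[of _ "y * gm"] exI[of _ z]) simp
  qed
qed

lemma coord_divisor_principal_iff:
  assumes z: "z \<in> carrier (Zpow s)"
  shows "coord_divisor z \<in> principal_divisors_mod XI \<longleftrightarrow> z \<in> cyclic_sub s (\<lambda>i. int (a i))"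
proof
  assume "z \<in> cyclic_sub s (\<lambda>i. int (a i))"
  then obtain k where k: "z = (\<lambda>i. if i < s then k * int (a i) else 0)" unfolding cyclic_sub_def
    by blast
  obtain x y where xy: "x \<notin> XI" "y \<notin> XI"
    "(\<lambda>P. div_mod XI x P - div_mod XI y P) = (\<lambda>P. k * div_mod XI var_u P)"
    by (rule principal_divisor_int_multiple[OF has_uniformizers_XI var_u_notin])
  have "coord_divisor z = (\<lambda>P. div_mod XI x P - div_mod XI y P)"
    unfolding xy(3) div_var_u_eq coord_divisor_def k
    by (simp add: sum_distrib_left if_distrib cong: if_cong)
  then show "coord_divisor z \<in> principal_divisors_mod XI"
    unfolding principal_divisors_mod_def using xy(1,2) by blast
next
  assume "coord_divisor z \<in> principal_divisors_mod XI"
  then obtain x y where h: "x \<notin> XI" "y \<notin> XI"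
    "coord_divisor z = (\<lambda>P. div_mod XI x P - div_mod XI y P)"
    unfolding principal_divisors_mod_def by blast
  have "div_mod XI x Q = div_mod XI y Q" if "Q \<in> H1" "var_u \<notin> Q" for Q
  proof -
    have "Q \<noteq> K i" if "i < s" for i using var_u_in_K that \<open>var_u \<notin> Q\<close> by blast
    then have "coord_divisor z Q = 0" by (rule coord_divisor_off)
    then show ?thesis using fun_cong[OF h(3), of Q] by simp
  qed
  then obtain k where k: "\<forall>j<s. div_mod XI x (K j) - div_mod XI y (K j) = k * int (a j)"
    using principal_divisor_off_u[OF h(1,2)] by blast
  have "z = (\<lambda>i. if i < s then k * int (a i) else 0)"
  proof
    fix i
    show "z i = (if i < s then k * int (a i) else 0)"
      using coord_divisor_K[of i z] h(3) k z unfolding Zpow_simps by auto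
  qed
  then show "z \<in> cyclic_sub s (\<lambda>i. int (a i))" unfolding cyclic_sub_def by blast
qed

theorem class_group_iso: "class_group_mod XI \<cong> Zpow s Mod cyclic_sub s (\<lambda>i. int (a i))"
  unfolding class_group_mod_def
proof (rule quotient_iso_from_hom[OF Zpow_comm_group weil_divisors_mod_comm_group
      principal_divisors_XI_subgroup])
  show "coord_divisor \<in> hom (Zpow s) (weil_divisors_mod XI)"
  proof (rule homI)
    show "coord_divisor z \<in> carrier (weil_divisors_mod XI)" for z by (rule coord_divisor_carrier)
    show "coord_divisor (z \<otimes>\<^bsub>Zpow s\<^esub> z') =
        coord_divisor z \<otimes>\<^bsub>weil_divisors_mod XI\<^esub> coord_divisor z'" for z z'
      unfolding Zpow_simps weil_divisors_mod_simps coord_divisor_add ..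
  qed
  show "\<exists>z\<in>carrier (Zpow s). \<exists>n\<in>principal_divisors_mod XI.
      D = n \<otimes>\<^bsub>weil_divisors_mod XI\<^esub> coord_divisor z"
    if D: "D \<in> carrier (weil_divisors_mod XI)" for D
  proof -
    obtain x y z where h: "x \<notin> XI" "y \<notin> XI" "z \<in> carrier (Zpow s)"
      "D = (\<lambda>P. (div_mod XI x P - div_mod XI y P) + coord_divisor z P)"
      using divisor_decomp[OF D] by blast
    have "(\<lambda>P. div_mod XI x P - div_mod XI y P) \<in> principal_divisors_mod XI"
      unfolding principal_divisors_mod_def using h(1,2) by blast
    then show ?thesis using h(3,4) unfolding weil_divisors_mod_simps by auto
  qed
  show "cyclic_sub s (\<lambda>i. int (a i)) \<subseteq> carrier (Zpow s)" unfolding cyclic_sub_def Zpow_simps by auto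
qed (rule coord_divisor_principal_iff)

end

theorem corollary4p4:
  fixes \<phi> :: "'k::field_char_0 \<Rightarrow> 'r::idom"
    and f :: 'r and s :: nat and p :: "nat \<Rightarrow> 'r" and a :: "nat \<Rightarrow> nat"
  assumes "alg_closed_field TYPE('k)"
    and "finitely_generated_algebra \<phi>"
    and "factorial_domain TYPE('r)"
    and "f \<notin> range \<phi>"
    and "\<And>i. i < s \<Longrightarrow> prime_element (p i)"
    and "\<And>i j. i < s \<Longrightarrow> j < s \<Longrightarrow> i \<noteq> j \<Longrightarrow> \<not> (p i dvd p j \<and> p j dvd p i)"
    and "\<And>i. i < s \<Longrightarrow> a i > 0"
    and "f = (\<Prod>i<s. p i ^ a i)"
  shows "class_group_mod (X_ideal f) \<cong> Zpow s Mod cyclic_sub s (\<lambda>i. int (a i))"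
proof -
  interpret uv_surface f s p a
    using assms(3,5-8) by unfold_locales (simp_all add: prime_element_iff_prime_elem)
  show ?thesis by (rule class_group_iso)
qed

end
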